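(* Let $\Gamma_1,\Gamma_2,H$ be finitely generated groups with $H$ amenable, and let $\phi_1:H\to\Gamma_1$, $\phi_2:H\to\Gamma_2$ be injective homomorphisms whose images are proper subgroups. Then the amalgamated free product $\Gamma_1*_H\Gamma_2=\langle\Gamma_1,\Gamma_2\mid\phi_1(h)=\phi_2(h)\ \forall h\in H\rangle$ is extraterrestrial.
   Context: A finitely generated group is extraterrestrial if its Cayley graph with respect to some (equivalently any) finite symmetric generating set is extraterrestrial, where a graph $G=(V,E)$ is extraterrestrial if for every $m$ there is $k$ such that for every $r$ there is a triple $(U,F,O)$ of pairwise disjoint finite vertex sets with $U\neq\emptyset$, $|U|\ge m|F|$, a bijection $\mu:U\to O$ with $d_G(u,\mu(u))\le k$, and every path from $U$ to $O$ either contains a vertex of $F$ or has length at least $r$. *)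

theory Defs
  imports "HOL-Algebra.Algebra" "HOL-Library.Extended_Nat"
begin

definition walk :: "('v \<Rightarrow> 'v \<Rightarrow> bool) \<Rightarrow> 'v list \<Rightarrow> bool" where
  "walk adj xs \<longleftrightarrow> xs \<noteq> [] \<and> (\<forall>i. Suc i < length xs \<longrightarrow> adj (xs ! i) (xs ! Suc i))"

definition walk_length :: "'v list \<Rightarrow> nat" where
  "walk_length xs = length xs - 1"

text \<open>Graph distance (infinite if there is no walk).\<close>
definition gdist :: "('v \<Rightarrow> 'v \<Rightarrow> bool) \<Rightarrow> 'v \<Rightarrow> 'v \<Rightarrow> enat" where
  "gdist adj u v = Inf {enat (walk_length xs) | xs. walk adj xs \<and> hd xs = u \<and> last xs = v}"

definition extraterrestrial_graph :: "'v set \<Rightarrow> ('v \<Rightarrow> 'v \<Rightarrow> bool) \<Rightarrow> bool" where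
  "extraterrestrial_graph V adj \<longleftrightarrow>
    (\<forall>m::nat. \<exists>k::nat. \<forall>r::nat. \<exists>U F Ou (\<mu> :: 'v \<Rightarrow> 'v).
       U \<subseteq> V \<and> F \<subseteq> V \<and> Ou \<subseteq> V \<and> finite U \<and> finite F \<and> finite Ou \<and>
       U \<inter> F = {} \<and> U \<inter> Ou = {} \<and> F \<inter> Ou = {} \<and>
       U \<noteq> {} \<and> card U \<ge> m * card F \<and>
       bij_betw \<mu> U Ou \<and> (\<forall>u\<in>U. gdist adj u (\<mu> u) \<le> enat k) \<and>
       (\<forall>xs. walk adj xs \<and> hd xs \<in> U \<and> last xs \<in> Ou \<longrightarrow>
              (\<exists>x\<in>set xs. x \<in> F) \<or> walk_length xs \<ge> r))"

definition finitely_generated :: "('a, 'b) monoid_scheme \<Rightarrow> bool" where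
  "finitely_generated G \<longleftrightarrow>
     (\<exists>S. finite S \<and> S \<subseteq> carrier G \<and> generate G S = carrier G)"

definition cayley_adj :: "('a, 'b) monoid_scheme \<Rightarrow> 'a set \<Rightarrow> 'a \<Rightarrow> 'a \<Rightarrow> bool" where
  "cayley_adj G S g h \<longleftrightarrow> g \<in> carrier G \<and> h \<in> carrier G \<and> (\<exists>s\<in>S. h = g \<otimes>\<^bsub>G\<^esub> s)"

definition extraterrestrial_group :: "('a, 'b) monoid_scheme \<Rightarrow> bool" where
  "extraterrestrial_group G \<longleftrightarrow>
     (\<exists>S. finite S \<and> S \<subseteq> carrier G \<and> (\<forall>s\<in>S. inv\<^bsub>G\<^esub> s \<in> S) \<and>
          generate G S = carrier G \<and>
          extraterrestrial_graph (carrier G) (cayley_adj G S))"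

definition amenable :: "('a, 'b) monoid_scheme \<Rightarrow> bool" where
  "amenable G \<longleftrightarrow>
     (\<exists>\<mu> :: 'a set \<Rightarrow> real.
        (\<forall>A. A \<subseteq> carrier G \<longrightarrow> \<mu> A \<ge> 0) \<and> \<mu> (carrier G) = 1 \<and>
        (\<forall>A B. A \<subseteq> carrier G \<and> B \<subseteq> carrier G \<and> A \<inter> B = {} \<longrightarrow> \<mu> (A \<union> B) = \<mu> A + \<mu> B) \<and>
        (\<forall>g\<in>carrier G. \<forall>A. A \<subseteq> carrier G \<longrightarrow> \<mu> (g <#\<^bsub>G\<^esub> A) = \<mu> A))"

text \<open>G is generated by the images of
  i1, i2, and the universal property is required for all target groups whose carrier
  consists of natural numbers; since G is then countable, this is equivalent to the full
  universal property (every pair of compatible maps factors through the countable subgroup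
  generated by their images).\<close>
definition is_amalgamated_product ::
  "('g, 'x) monoid_scheme \<Rightarrow> ('a, 'y) monoid_scheme \<Rightarrow> ('b, 'z) monoid_scheme \<Rightarrow>
   ('h, 'w) monoid_scheme \<Rightarrow> ('h \<Rightarrow> 'a) \<Rightarrow> ('h \<Rightarrow> 'b) \<Rightarrow> ('a \<Rightarrow> 'g) \<Rightarrow> ('b \<Rightarrow> 'g) \<Rightarrow> bool" where
  "is_amalgamated_product G G1 G2 H \<phi>1 \<phi>2 i1 i2 \<longleftrightarrow>
     group G \<and> i1 \<in> hom G1 G \<and> i2 \<in> hom G2 G \<and>
     (\<forall>h\<in>carrier H. i1 (\<phi>1 h) = i2 (\<phi>2 h)) \<and>
     generate G (i1 ` carrier G1 \<union> i2 ` carrier G2) = carrier G \<and>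
     (\<forall>(K :: nat monoid) f1 f2.
        group K \<and> f1 \<in> hom G1 K \<and> f2 \<in> hom G2 K \<and>
        (\<forall>h\<in>carrier H. f1 (\<phi>1 h) = f2 (\<phi>2 h)) \<longrightarrow>
        (\<exists>f \<in> hom G K. (\<forall>x\<in>carrier G1. f (i1 x) = f1 x) \<and> (\<forall>x\<in>carrier G2. f (i2 x) = f2 x)))"

end

theory Submission
  imports Defs "HOL-Library.Countable_Set"
begin

text \<open>By van der Waerden's trick the amalgam G acts on normal forms (h, c1 ... cn), with h in H
  and the ci alternating coset representatives of H in G1 and G2, so normal forms are unique.
  Right multiplication by a generator from one factor never changes the factor of the first
  letter of a nonempty normal form; hence a path from a point whose normal form starts in G1 to
  one whose normal form starts in G2 passes through the copy of H.

  Fix a in G1 - H and b in G2 - H, and let u j = abab...a and v j = baba...b be the words of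
  length 2j + 1. A path of length at most r from h u j to a point h' v j' meets H in h t, where t
  lies in a finite set T independent of h. Amenability of H gives a finite A with
  card (A T) < 2 card A. Then U = A u j, O = A v j (j \<le> 2m) and F = A T, with h u j mapped to
  h v j, witness that G is extraterrestrial.\<close>

section \<open>Hall's marriage theorem for countable families\<close>

lemma hall_critical_restrict:
  assumes fin: "finite L" "\<forall>v\<in>L. finite (N v)"
    and hall: "\<forall>Q\<subseteq>L. card Q \<le> card (\<Union>(N ` Q))"
    and Q: "Q \<subseteq> L" "card (\<Union>(N ` Q)) = card Q"
  shows "\<forall>Y\<subseteq>L - Q. card Y \<le> card (\<Union>v\<in>Y. N v - \<Union>(N ` Q))"
proof (intro allI impI)
  fix Y assume Y: "Y \<subseteq> L - Q"
  have finY: "finite Y" "finite Q" using Y Q(1) fin(1) finite_subset by blast+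
  have finNQ: "finite (\<Union>(N ` Q))" using finY(2) Q(1) fin(2) by auto
  have "card Y + card Q = card (Y \<union> Q)" using Y finY by (subst card_Un_disjoint) auto
  also have "\<dots> \<le> card (\<Union>(N ` (Y \<union> Q)))" using hall Y Q(1) by blast
  also have "\<Union>(N ` (Y \<union> Q)) = (\<Union>v\<in>Y. N v - \<Union>(N ` Q)) \<union> \<Union>(N ` Q)" by auto
  also have "card \<dots> = card (\<Union>v\<in>Y. N v - \<Union>(N ` Q)) + card Q"
    using finY Y fin(2) finNQ Q(2) by (subst card_Un_disjoint) auto
  finally show "card Y \<le> card (\<Union>v\<in>Y. N v - \<Union>(N ` Q))" by simp
qed

lemma hall_surplus_remove:
  assumes fin: "finite L" "\<forall>v\<in>L. finite (N v)"
    and surplus: "\<And>Q. Q \<subseteq> L \<Longrightarrow> Q \<noteq> {} \<Longrightarrow> Q \<noteq> L \<Longrightarrow> card Q < card (\<Union>(N ` Q))"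
    and v: "v \<in> L"
  shows "\<forall>Y\<subseteq>L - {v}. card Y \<le> card (\<Union>u\<in>Y. N u - {y})"
proof (intro allI impI)
  fix Y assume Y: "Y \<subseteq> L - {v}"
  show "card Y \<le> card (\<Union>u\<in>Y. N u - {y})"
  proof (cases "Y = {}")
    case False
    have "finite Y" using Y fin(1) by (meson Diff_subset finite_subset subset_trans)
    hence "finite (\<Union>(N ` Y))" using Y fin(2) by auto
    moreover have "card Y < card (\<Union>(N ` Y))" using surplus[of Y] Y v False by blast
    moreover have "(\<Union>u\<in>Y. N u - {y}) = \<Union>(N ` Y) - {y}" by auto
    ultimately show ?thesis using card_Diff_singleton_if[of "\<Union>(N ` Y)" y] by auto
  qed simp
qed

lemma matching_combine:
  assumes "Q \<subseteq> L" "inj_on f1 Q" "\<forall>v\<in>Q. f1 v \<in> N v"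
    and "inj_on f2 (L - Q)" "\<forall>v\<in>L - Q. f2 v \<in> N v - \<Union>(N ` Q)"
  shows "\<exists>f. inj_on f L \<and> (\<forall>v\<in>L. f v \<in> N v)"
proof -
  define f where "f v = (if v \<in> Q then f1 v else f2 v)" for v
  have "f1 ` Q \<inter> f2 ` (L - Q) = {}" using assms(3,5) by fastforce
  hence "inj_on f (Q \<union> (L - Q))" unfolding f_def by (rule inj_on_disjoint_Un[OF assms(2,4)])
  moreover have "Q \<union> (L - Q) = L" using assms(1) by blast
  ultimately have "inj_on f L" by simp
  moreover have "\<forall>v\<in>L. f v \<in> N v" using assms(3,5) by (simp add: f_def)
  ultimately show ?thesis by blast
qed

lemma matching_extend:
  assumes v: "v \<in> L" and y: "y \<in> N v"
    and f: "inj_on f (L - {v})" "\<forall>u\<in>L - {v}. f u \<in> N u - {y}"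
  shows "\<exists>f. inj_on f L \<and> (\<forall>v\<in>L. f v \<in> N v)"
proof -
  have "inj_on (f(v := y)) (L - {v})" using f(1) by (simp add: inj_on_def)
  moreover have "y \<notin> (f(v := y)) ` (L - {v})" using f(2) by auto
  ultimately have "inj_on (f(v := y)) (insert v (L - {v}))" unfolding inj_on_insert by simp
  hence "inj_on (f(v := y)) L" by (simp only: insert_Diff[OF v])
  moreover have "\<forall>u\<in>L. (f(v := y)) u \<in> N u" using f(2) y by simp
  ultimately show ?thesis by blast
qed

theorem hall_finite:
  assumes "finite L" "\<forall>v\<in>L. finite (N v)" "\<forall>Q\<subseteq>L. card Q \<le> card (\<Union>(N ` Q))"
  shows "\<exists>f. inj_on f L \<and> (\<forall>v\<in>L. f v \<in> N v)"
  using assms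
proof (induction "card L" arbitrary: L N rule: less_induct)
  case less
  show ?case
  proof (cases "\<exists>Q. Q \<subseteq> L \<and> Q \<noteq> {} \<and> Q \<noteq> L \<and> card (\<Union>(N ` Q)) = card Q")
    case True
    then obtain Q where Q: "Q \<subseteq> L" "Q \<noteq> {}" "Q \<noteq> L" "card (\<Union>(N ` Q)) = card Q" by blast
    have finQ: "finite Q" using Q(1) less.prems(1) finite_subset by blast
    have "card Q < card L" using Q(1,3) less.prems(1) by (simp add: psubset_card_mono psubsetI)
    moreover have "\<forall>v\<in>Q. finite (N v)" "\<forall>Q'\<subseteq>Q. card Q' \<le> card (\<Union>(N ` Q'))"
      using less.prems Q(1) by auto
    ultimately obtain f1 where f1: "inj_on f1 Q" "\<forall>v\<in>Q. f1 v \<in> N v"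
      using less.hyps[of Q N] finQ by blast
    have "L - Q \<subset> L" using Q(1,2) by blast
    hence "card (L - Q) < card L" using less.prems(1) by (rule psubset_card_mono[rotated])
    moreover have "\<forall>v\<in>L - Q. finite (N v - \<Union>(N ` Q))" using less.prems(2) by auto
    ultimately obtain f2 where f2: "inj_on f2 (L - Q)" "\<forall>v\<in>L - Q. f2 v \<in> N v - \<Union>(N ` Q)"
      using less.hyps[of "L - Q" "\<lambda>v. N v - \<Union>(N ` Q)"] less.prems(1)
        hall_critical_restrict[OF less.prems(1,2,3) Q(1,4)] by blast
    show ?thesis using matching_combine[OF Q(1) f1 f2] .
  next
    case no_critical: False
    show ?thesis
    proof (cases "L = {}")
      case False
      then obtain v where v: "v \<in> L" by auto
      have surplus: "card Q < card (\<Union>(N ` Q))" if "Q \<subseteq> L" "Q \<noteq> {}" "Q \<noteq> L" for Q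
      proof -
        have "card Q \<le> card (\<Union>(N ` Q))" using less.prems(3) that(1) by blast
        moreover have "card (\<Union>(N ` Q)) \<noteq> card Q" using no_critical that by blast
        ultimately show ?thesis by linarith
      qed
      have "card {v} \<le> card (\<Union>(N ` {v}))" using less.prems(3) v by blast
      then obtain y where y: "y \<in> N v" by fastforce
      have "card (L - {v}) < card L" using v less.prems(1) by (rule card_Diff1_less[rotated])
      moreover have "\<forall>u\<in>L - {v}. finite (N u - {y})" using less.prems(2) by auto
      ultimately obtain f where f: "inj_on f (L - {v})" "\<forall>u\<in>L - {v}. f u \<in> N u - {y}"
        using less.hyps[of "L - {v}" "\<lambda>u. N u - {y}"] less.prems(1)
          hall_surplus_remove[OF less.prems(1,2) surplus v] by blast
      show ?thesis using matching_extend[OF v y f] .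
    qed simp
  qed
qed

lemma koenig_finite_choices:
  fixes ok :: "nat \<Rightarrow> (nat \<Rightarrow> 'b) \<Rightarrow> bool"
  assumes fin: "\<And>i. finite (C i)"
    and ex: "\<And>M. \<exists>q. ok M q"
    and range: "\<And>M q i. ok M q \<Longrightarrow> i < M \<Longrightarrow> q i \<in> C i"
    and mono: "\<And>M M' q. ok M q \<Longrightarrow> M' \<le> M \<Longrightarrow> ok M' q"
    and local: "\<And>M q q'. ok M q \<Longrightarrow> (\<And>i. i < M \<Longrightarrow> q' i = q i) \<Longrightarrow> ok M q'"
  shows "\<exists>g. \<forall>M. ok M g"
proof -
  define ext where "ext n p \<longleftrightarrow> (\<forall>M\<ge>n. \<exists>q. ok M q \<and> (\<forall>i<n. q i = p i))" for n p
  have ext0: "ext 0 p" for p unfolding ext_def using ex by auto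
  have step: "\<exists>c. ext (Suc n) (p(n := c))" if ext: "ext n p" for n p
  proof (rule ccontr)
    assume "\<nexists>c. ext (Suc n) (p(n := c))"
    hence "\<forall>c. \<exists>M. \<forall>q. ok M q \<longrightarrow> (\<exists>i<Suc n. q i \<noteq> (p(n := c)) i)"
      unfolding ext_def by blast
    from choice[OF this] obtain Mf
      where Mf: "\<forall>c q. ok (Mf c) q \<longrightarrow> (\<exists>i<Suc n. q i \<noteq> (p(n := c)) i)"
      by blast
    define M where "M = Max (insert (Suc n) (Mf ` C n))"
    have M: "Suc n \<le> M" "\<And>c. c \<in> C n \<Longrightarrow> Mf c \<le> M" unfolding M_def using fin by auto
    obtain q where q: "ok M q" "\<forall>i<n. q i = p i" using ext M(1) unfolding ext_def by (meson Suc_leD)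
    have "q n \<in> C n" using range[OF q(1)] M(1) by simp
    hence "ok (Mf (q n)) q" by (rule mono[OF q(1) M(2)])
    then obtain i where "i < Suc n" "q i \<noteq> (p(n := q n)) i" using Mf by blast
    thus False using q(2) less_Suc_eq[of i n] by (cases "i = n") simp_all
  qed
  define P where "P = rec_nat (\<lambda>_. undefined) (\<lambda>n p. p(n := SOME c. ext (Suc n) (p(n := c))))"
  have P_Suc: "P (Suc n) = (P n)(n := SOME c. ext (Suc n) ((P n)(n := c)))" for n
    unfolding P_def by simp
  have ext_P: "ext n (P n)" for n
  proof (induction n)
    case (Suc n)
    show ?case unfolding P_Suc by (rule someI_ex[OF step[OF Suc]])
  qed (rule ext0)
  have P_stable: "P M i = P (Suc i) i" if "i < M" for M i
    using that by (induction M) (auto simp: P_Suc less_Suc_eq)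
  have "ok M (\<lambda>i. P (Suc i) i)" for M
  proof -
    obtain q where q: "ok M q" "\<forall>i<M. q i = P M i" using ext_P[of M] unfolding ext_def by blast
    have "P (Suc i) i = q i" if "i < M" for i using q(2) P_stable[OF that] that by simp
    thus ?thesis by (rule local[OF q(1)])
  qed
  thus ?thesis by blast
qed

lemma koenig_injective_choice:
  fixes C :: "nat \<Rightarrow> 'b set"
  assumes fin: "\<And>i. finite (C i)" and prefixes: "\<And>M. \<exists>q. inj_on q {..<M} \<and> (\<forall>i<M. q i \<in> C i)"
  shows "\<exists>g. inj g \<and> (\<forall>i. g i \<in> C i)"
proof -
  define ok where "ok M q \<longleftrightarrow> (\<forall>i<M. q i \<in> C i) \<and> inj_on q {..<M}" for M q
  have "\<exists>g. \<forall>M. ok M g"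
  proof (rule koenig_finite_choices[of C])
    show "\<exists>q. ok M q" for M using prefixes[of M] unfolding ok_def by blast
    show "ok M' q" if "ok M q" "M' \<le> M" for M M' q
    proof -
      have sub: "{..<M'} \<subseteq> {..<M}" using that(2) by auto
      have "inj_on q {..<M'}" using that(1) inj_on_subset[OF _ sub] unfolding ok_def by blast
      moreover have "\<forall>i<M'. q i \<in> C i"
        using that less_le_trans[of _ M' M] unfolding ok_def by blast
      ultimately show ?thesis unfolding ok_def by blast
    qed
    show "ok M q'" if "ok M q" "\<And>i. i < M \<Longrightarrow> q' i = q i" for M q q'
    proof -
      have "inj_on q' {..<M} = inj_on q {..<M}" by (rule inj_on_cong) (simp add: that(2))
      thus ?thesis using that unfolding ok_def by simp
    qed
  qed (simp_all add: fin ok_def)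
  then obtain g where g: "\<And>M. ok M g" by blast
  have "inj g"
  proof (rule injI)
    fix i j assume "g i = g j"
    moreover have "inj_on g {..<Suc (max i j)}" using g unfolding ok_def by blast
    ultimately show "i = j" by (auto dest: inj_onD)
  qed
  moreover have "g i \<in> C i" for i using g[of "Suc i"] unfolding ok_def by blast
  ultimately show ?thesis by blast
qed

theorem hall_countable:
  assumes L: "countable L" and fin: "\<forall>v\<in>L. finite (N v)"
    and hall: "\<forall>Q\<subseteq>L. finite Q \<longrightarrow> card Q \<le> card (\<Union>(N ` Q))"
  shows "\<exists>f. inj_on f L \<and> (\<forall>v\<in>L. f v \<in> N v)"
proof (cases "finite L")
  case True
  have "\<forall>Q\<subseteq>L. card Q \<le> card (\<Union>(N ` Q))"
    using hall finite_subset[OF _ True] by simp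
  thus ?thesis using hall_finite[OF True fin] by simp
next
  case False
  define e where "e = from_nat_into L"
  have e: "bij_betw e UNIV L" unfolding e_def using bij_betw_from_nat_into[OF L False] .
  have e_L: "e i \<in> L" for i using bij_betw_imp_surj_on[OF e] by blast
  have "\<exists>q. inj_on q {..<M} \<and> (\<forall>i<M. q i \<in> N (e i))" for M
  proof -
    have fin_M: "\<forall>v\<in>e ` {..<M}. finite (N v)" using fin e_L by simp
    have "\<forall>Q\<subseteq>e ` {..<M}. card Q \<le> card (\<Union>(N ` Q))"
    proof (intro allI impI)
      fix Q assume Q: "Q \<subseteq> e ` {..<M}"
      hence "finite Q" by (rule finite_subset) simp
      moreover have "Q \<subseteq> L" using Q e_L by blast
      ultimately show "card Q \<le> card (\<Union>(N ` Q))" using hall by simp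
    qed
    then obtain f where f: "inj_on f (e ` {..<M})" "\<forall>v\<in>e ` {..<M}. f v \<in> N v"
      using hall_finite[OF finite_imageI[OF finite_lessThan] fin_M] by auto
    have "inj_on (f \<circ> e) {..<M}"
      by (rule comp_inj_on[OF inj_on_subset[OF bij_betw_imp_inj_on[OF e]] f(1)]) simp
    moreover have "\<forall>i<M. (f \<circ> e) i \<in> N (e i)" using f(2) by simp
    ultimately show ?thesis by blast
  qed
  then obtain g where g: "inj g" "\<And>i. g i \<in> N (e i)"
    using koenig_injective_choice[of "\<lambda>i. N (e i)"] fin e_L by blast
  have "inj_on (g \<circ> to_nat_on L) L" using g(1) inj_on_to_nat_on[OF L] by (simp add: comp_inj_on inj_on_subset)
  moreover have "(g \<circ> to_nat_on L) v \<in> N v" if "v \<in> L" for v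
    using g(2)[of "to_nat_on L v"] from_nat_into_to_nat_on[OF L that] unfolding e_def by simp
  ultimately show ?thesis by blast
qed

section \<open>Folner sets of amenable groups\<close>

lemma (in group) set_inv_set_mult:
  assumes "A \<subseteq> carrier G" "B \<subseteq> carrier G"
  shows "set_inv (A <#> B) = set_inv B <#> set_inv A"
  using assms unfolding SET_INV_def set_mult_def by (auto simp: inv_mult_group subset_iff)

lemma (in group) card_set_inv:
  assumes "A \<subseteq> carrier G" shows "card (set_inv A) = card A"
proof -
  have "set_inv A = m_inv G ` A" unfolding SET_INV_def by auto
  moreover have "inj_on (m_inv G) A" using assms by (intro inj_onI) (metis inv_inv subsetD)
  ultimately show ?thesis by (simp add: card_image)
qed

lemma (in group) set_inv_closed: "A \<subseteq> carrier G \<Longrightarrow> set_inv A \<subseteq> carrier G"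
  unfolding SET_INV_def by auto

lemma (in group) set_inv_set_inv: "A \<subseteq> carrier G \<Longrightarrow> set_inv (set_inv A) = A"
  unfolding SET_INV_def by (auto simp: subset_iff)

lemma finite_set_inv: "finite A \<Longrightarrow> finite (set_inv\<^bsub>G\<^esub> A)"
  unfolding SET_INV_def by simp

locale invariant_mean = group H for H (structure) +
  fixes \<mu> :: "'a set \<Rightarrow> real"
  assumes nonneg: "A \<subseteq> carrier H \<Longrightarrow> \<mu> A \<ge> 0"
    and total: "\<mu> (carrier H) = 1"
    and additive: "A \<subseteq> carrier H \<Longrightarrow> B \<subseteq> carrier H \<Longrightarrow> A \<inter> B = {} \<Longrightarrow> \<mu> (A \<union> B) = \<mu> A + \<mu> B"
    and left_invariant: "g \<in> carrier H \<Longrightarrow> A \<subseteq> carrier H \<Longrightarrow> \<mu> (g <# A) = \<mu> A"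
begin

lemma measure_mono:
  assumes "A \<subseteq> B" "B \<subseteq> carrier H" shows "\<mu> A \<le> \<mu> B"
proof -
  have "A \<subseteq> carrier H" "B - A \<subseteq> carrier H" using assms by auto
  hence "\<mu> B = \<mu> A + \<mu> (B - A)" using additive[of A "B - A"] assms(1) by (simp add: Un_absorb1)
  thus ?thesis using nonneg[of "B - A"] \<open>B - A \<subseteq> carrier H\<close> by simp
qed

lemma measure_disjoint_UN:
  assumes "finite I" "\<And>i. i \<in> I \<Longrightarrow> Q i \<subseteq> carrier H"
    and "disjoint_family_on Q I"
  shows "\<mu> (\<Union>i\<in>I. Q i) = (\<Sum>i\<in>I. \<mu> (Q i))"
  using assms
proof (induction I rule: finite_induct)
  case empty
  show ?case using additive[of "{}" "{}"] by simp
next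
  case (insert i I)
  have "Q i \<inter> (\<Union>j\<in>I. Q j) = {}"
    using insert.prems(2) insert.hyps(2) by (fastforce simp: disjoint_family_on_def)
  hence "\<mu> (Q i \<union> (\<Union>j\<in>I. Q j)) = \<mu> (Q i) + \<mu> (\<Union>j\<in>I. Q j)"
    using insert.prems(1) by (intro additive) auto
  moreover have "disjoint_family_on Q I" by (rule disjoint_family_on_mono[OF subset_insertI insert.prems(2)])
  ultimately show ?case using insert by simp
qed

text \<open>A map moving every point by a left translation from a finite set T cuts the group into
  finitely many pieces, each translated by a single element of T; by invariance and additivity
  its image has full measure.\<close>
lemma injective_displacement_full_measure:
  assumes T: "finite T" "T \<subseteq> carrier H"
    and f: "inj_on f (carrier H)" "\<And>h. h \<in> carrier H \<Longrightarrow> f h \<in> T #> h"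
  shows "\<mu> (f ` carrier H) = 1"
proof -
  have "\<forall>h\<in>carrier H. \<exists>t. t \<in> T \<and> f h = t \<otimes> h" using f(2) unfolding r_coset_def by blast
  from bchoice[OF this] obtain \<tau> where \<tau>: "\<forall>h\<in>carrier H. \<tau> h \<in> T \<and> f h = \<tau> h \<otimes> h"
    by blast
  define P where "P t = {h \<in> carrier H. \<tau> h = t}" for t
  have P: "P t \<subseteq> carrier H" for t unfolding P_def by auto
  have image: "f ` carrier H = (\<Union>t\<in>T. t <# P t)"
    using \<tau> unfolding P_def l_coset_def by force
  have "disjoint_family_on (\<lambda>t. t <# P t) T"
    unfolding disjoint_family_on_def
  proof (intro ballI impI)
    fix t t' assume tt': "t \<in> T" "t' \<in> T" "t \<noteq> t'"
    show "(t <# P t) \<inter> (t' <# P t') = {}"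
    proof (rule ccontr)
      assume "(t <# P t) \<inter> (t' <# P t') \<noteq> {}"
      then obtain h h' where hh': "h \<in> P t" "h' \<in> P t'" "t \<otimes> h = t' \<otimes> h'"
        unfolding l_coset_def by blast
      hence "f h = f h'" "h \<in> carrier H" "h' \<in> carrier H" using \<tau> unfolding P_def by auto
      hence "h = h'" using f(1) by (auto dest: inj_onD)
      thus False using hh' tt' unfolding P_def by simp
    qed
  qed
  moreover have "t <# P t \<subseteq> carrier H" if "t \<in> T" for t using l_coset_subset_G[OF P] T(2) that by blast
  ultimately have "\<mu> (f ` carrier H) = (\<Sum>t\<in>T. \<mu> (t <# P t))"
    unfolding image using T(1) by (intro measure_disjoint_UN)
  also have "\<dots> = (\<Sum>t\<in>T. \<mu> (P t))" using T(2) P left_invariant by (intro sum.cong) auto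
  also have "\<dots> = \<mu> (\<Union>t\<in>T. P t)"
    using T P by (intro measure_disjoint_UN[symmetric]) (auto simp: disjoint_family_on_def P_def)
  also have "(\<Union>t\<in>T. P t) = carrier H" using \<tau> unfolding P_def by auto
  finally show ?thesis using total by simp
qed

lemma no_injective_doubling:
  assumes T: "finite T" "T \<subseteq> carrier H"
    and f: "inj_on f (carrier H \<times> (UNIV :: bool set))"
      "\<And>h i. h \<in> carrier H \<Longrightarrow> f (h, i) \<in> T #> h"
  shows False
proof -
  define Im where "Im i = (\<lambda>h. f (h, i)) ` carrier H" for i
  have inj: "inj_on (\<lambda>h. f (h, i)) (carrier H)" for i using f(1) by (auto simp: inj_on_def)
  have Im: "\<mu> (Im i) = 1" for i
    unfolding Im_def using injective_displacement_full_measure[OF T inj] f(2) by simp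
  have sub: "Im i \<subseteq> carrier H" for i using f(2) r_coset_subset_G[OF T(2)] unfolding Im_def by blast
  have "Im True \<inter> Im False = {}" using f(1) unfolding Im_def by (auto dest: inj_onD)
  hence "\<mu> (Im True \<union> Im False) = 2" using additive[OF sub sub] Im by simp
  moreover have "\<mu> (Im True \<union> Im False) \<le> 1" using measure_mono[of _ "carrier H"] sub total by simp
  ultimately show False by simp
qed

end

lemma amenable_imp_invariant_mean:
  assumes "group H" "amenable H" obtains \<mu> where "invariant_mean H \<mu>"
proof -
  from assms(2) obtain \<mu> :: "'a set \<Rightarrow> real" where
    "\<forall>A. A \<subseteq> carrier H \<longrightarrow> \<mu> A \<ge> 0" "\<mu> (carrier H) = 1"
    "\<forall>A B. A \<subseteq> carrier H \<and> B \<subseteq> carrier H \<and> A \<inter> B = {} \<longrightarrow> \<mu> (A \<union> B) = \<mu> A + \<mu> B"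
    "\<forall>g\<in>carrier H. \<forall>A. A \<subseteq> carrier H \<longrightarrow> \<mu> (g <#\<^bsub>H\<^esub> A) = \<mu> A"
    unfolding amenable_def by (elim exE conjE)
  hence "invariant_mean H \<mu>"
    by (intro invariant_mean.intro[OF assms(1)] invariant_mean_axioms.intro) simp_all
  thus thesis by (rule that)
qed

text \<open>Amenability yields Folner sets with doubling constant 2: otherwise Hall's theorem
  would produce an injective two-to-one compression by finitely many translations.\<close>
theorem amenable_left_folner:
  assumes "group H" "amenable H" "countable (carrier H)" "finite T" "T \<subseteq> carrier H"
  shows "\<exists>B. finite B \<and> B \<noteq> {} \<and> B \<subseteq> carrier H \<and> card (T <#>\<^bsub>H\<^esub> B) < 2 * card B"
proof (rule ccontr)
  assume no_folner: "\<not> ?thesis"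
  obtain \<mu> where "invariant_mean H \<mu>" using amenable_imp_invariant_mean[OF assms(1,2)] .
  then interpret invariant_mean H \<mu> .
  define L where "L = carrier H \<times> (UNIV :: bool set)"
  define N where "N v = T #>\<^bsub>H\<^esub> fst v" for v :: "'a \<times> bool"
  have "\<forall>Q\<subseteq>L. finite Q \<longrightarrow> card Q \<le> card (\<Union>(N ` Q))"
  proof (intro allI impI)
    fix Q assume Q: "Q \<subseteq> L" "finite Q"
    define B where "B = fst ` Q"
    have B: "finite B" "B \<subseteq> carrier H" using Q unfolding B_def L_def by auto
    have "card Q \<le> card (B \<times> (UNIV :: bool set))"
      using B by (intro card_mono) (auto simp: B_def intro: rev_image_eqI)
    also have "\<dots> = 2 * card B" by (simp add: card_cartesian_product)
    also have "\<dots> \<le> card (T <#>\<^bsub>H\<^esub> B)"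
    proof (cases "B = {}")
      case False
      hence "\<not> card (T <#>\<^bsub>H\<^esub> B) < 2 * card B" using no_folner B by blast
      thus ?thesis by simp
    qed simp
    also have "T <#>\<^bsub>H\<^esub> B = \<Union>(N ` Q)" unfolding set_mult_def r_coset_def N_def B_def by auto
    finally show "card Q \<le> card (\<Union>(N ` Q))" .
  qed
  moreover have "countable L" "\<forall>v\<in>L. finite (N v)" using assms(3,4) unfolding L_def N_def r_coset_def
    by auto
  ultimately obtain f where "inj_on f L" "\<forall>v\<in>L. f v \<in> N v" using hall_countable by blast
  thus False using no_injective_doubling[OF assms(4,5), of f] unfolding L_def N_def by auto
qed

theorem amenable_right_folner:
  assumes "group H" "amenable H" "countable (carrier H)" "finite T" "T \<subseteq> carrier H"
  shows "\<exists>A. finite A \<and> A \<noteq> {} \<and> A \<subseteq> carrier H \<and> card (A <#>\<^bsub>H\<^esub> T) < 2 * card A"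
proof -
  interpret group H by fact
  obtain B where B: "finite B" "B \<noteq> {}" "B \<subseteq> carrier H"
    "card (set_inv\<^bsub>H\<^esub> T <#>\<^bsub>H\<^esub> B) < 2 * card B"
    using amenable_left_folner[OF assms(1-3) finite_set_inv set_inv_closed] assms(4,5) by blast
  have "set_inv\<^bsub>H\<^esub> B <#>\<^bsub>H\<^esub> T = set_inv\<^bsub>H\<^esub> (set_inv\<^bsub>H\<^esub> T <#>\<^bsub>H\<^esub> B)"
    using B(3) assms(5) by (simp add: set_inv_set_mult set_inv_closed set_inv_set_inv)
  hence "card (set_inv\<^bsub>H\<^esub> B <#>\<^bsub>H\<^esub> T) = card (set_inv\<^bsub>H\<^esub> T <#>\<^bsub>H\<^esub> B)"
    using B(3) assms(5) by (simp add: card_set_inv set_mult_closed set_inv_closed)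
  moreover have "card (set_inv\<^bsub>H\<^esub> B) = card B" using B(3) by (rule card_set_inv)
  moreover have "set_inv\<^bsub>H\<^esub> B \<noteq> {}" using B(2) unfolding SET_INV_def by simp
  moreover have "finite (set_inv\<^bsub>H\<^esub> B)" "set_inv\<^bsub>H\<^esub> B \<subseteq> carrier H"
    using B(1,3) by (simp_all add: finite_set_inv set_inv_closed)
  ultimately show ?thesis using B(4) by (intro exI[of _ "set_inv\<^bsub>H\<^esub> B"]) simp
qed

section \<open>Normal forms in amalgamated products\<close>

definition list_prod :: "('a, 'b) monoid_scheme \<Rightarrow> 'a list \<Rightarrow> 'a" where
  "list_prod G l = foldr (\<lambda>x y. x \<otimes>\<^bsub>G\<^esub> y) l \<one>\<^bsub>G\<^esub>"

lemma list_prod_Nil [simp]: "list_prod G [] = \<one>\<^bsub>G\<^esub>"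
  by (simp add: list_prod_def)

lemma list_prod_Cons [simp]: "list_prod G (x # l) = x \<otimes>\<^bsub>G\<^esub> list_prod G l"
  by (simp add: list_prod_def)

lemma (in monoid) list_prod_closed [simp]: "set l \<subseteq> carrier G \<Longrightarrow> list_prod G l \<in> carrier G"
  by (induction l) auto

lemma (in monoid) list_prod_append:
  "set l1 \<subseteq> carrier G \<Longrightarrow> set l2 \<subseteq> carrier G \<Longrightarrow> list_prod G (l1 @ l2) = list_prod G l1 \<otimes> list_prod G l2"
  by (induction l1) (auto simp: m_assoc)

lemma (in group) generate_imp_list_prod:
  assumes "S \<subseteq> carrier G" "g \<in> generate G S"
  shows "\<exists>l. set l \<subseteq> S \<union> m_inv G ` S \<and> g = list_prod G l"
  using assms(2)
proof (induction rule: generate.induct)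
  case one thus ?case by (intro exI[of _ "[]"]) auto
next
  case (incl h) thus ?case using assms(1) by (intro exI[of _ "[h]"]) auto
next
  case (inv h) thus ?case using assms(1) by (intro exI[of _ "[inv h]"]) auto
next
  case (eng h1 h2)
  then obtain l1 l2 where l: "set l1 \<subseteq> S \<union> m_inv G ` S" "h1 = list_prod G l1"
    "set l2 \<subseteq> S \<union> m_inv G ` S" "h2 = list_prod G l2" by blast
  have "S \<union> m_inv G ` S \<subseteq> carrier G" using assms(1) by auto
  hence "h1 \<otimes> h2 = list_prod G (l1 @ l2)" using l list_prod_append by (simp add: subset_trans)
  thus ?case using l by (intro exI[of _ "l1 @ l2"]) auto
qed

lemma (in group) countable_generate:
  assumes "S \<subseteq> carrier G" "countable S"
  shows "countable (generate G S)"
proof -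
  have "generate G S \<subseteq> list_prod G ` lists (S \<union> m_inv G ` S)"
  proof
    fix g assume "g \<in> generate G S"
    then obtain l where "set l \<subseteq> S \<union> m_inv G ` S" "g = list_prod G l"
      using generate_imp_list_prod[OF assms(1)] by blast
    thus "g \<in> list_prod G ` lists (S \<union> m_inv G ` S)" by blast
  qed
  moreover have "countable (list_prod G ` lists (S \<union> m_inv G ` S))" using assms(2) by simp
  ultimately show ?thesis by (rule countable_subset)
qed

text \<open>rep chooses a representative of each right coset of the embedded copy Hsub of H, with
  \<one> for Hsub itself, so every y in K is uniquely \<psi> (coeff y) \<otimes> rep y.\<close>
locale transversal = group_hom H K \<psi> for H K \<psi> +
  assumes inj: "inj_on \<psi> (carrier H)"
begin

abbreviation Hsub :: "'c set" where "Hsub \<equiv> \<psi> ` carrier H"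

lemma Hsub_subgroup: "subgroup Hsub K"
  by (rule img_is_subgroup)

definition rep :: "'c \<Rightarrow> 'c" where
  "rep y = (if Hsub #>\<^bsub>K\<^esub> y = Hsub then \<one>\<^bsub>K\<^esub> else SOME c. c \<in> Hsub #>\<^bsub>K\<^esub> y)"

definition coeff :: "'c \<Rightarrow> 'a" where
  "coeff y = the_inv_into (carrier H) \<psi> (y \<otimes>\<^bsub>K\<^esub> inv\<^bsub>K\<^esub> rep y)"

lemma coset_eq_Hsub_iff: "y \<in> carrier K \<Longrightarrow> Hsub #>\<^bsub>K\<^esub> y = Hsub \<longleftrightarrow> y \<in> Hsub"
  using H.rcos_self[OF _ Hsub_subgroup] subgroup.rcos_const[OF Hsub_subgroup H.is_group] by blast

lemma rep_in_coset: assumes "y \<in> carrier K" shows "rep y \<in> Hsub #>\<^bsub>K\<^esub> y"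
proof (cases "Hsub #>\<^bsub>K\<^esub> y = Hsub")
  case True
  thus ?thesis unfolding rep_def using subgroup.one_closed[OF Hsub_subgroup] by simp
next
  case False
  thus ?thesis unfolding rep_def using H.rcos_self[OF assms Hsub_subgroup] by (auto intro: someI)
qed

lemma rep_closed: "y \<in> carrier K \<Longrightarrow> rep y \<in> carrier K"
  using rep_in_coset H.r_coset_subset_G[OF subgroup.subset[OF Hsub_subgroup]] by blast

lemma coset_rep: "y \<in> carrier K \<Longrightarrow> Hsub #>\<^bsub>K\<^esub> rep y = Hsub #>\<^bsub>K\<^esub> y"
  using H.repr_independence[OF rep_in_coset _ Hsub_subgroup] by simp

lemma rep_coset_cong:
  assumes "y \<in> carrier K" "y' \<in> carrier K" "Hsub #>\<^bsub>K\<^esub> y = Hsub #>\<^bsub>K\<^esub> y'"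
  shows "rep y = rep y'"
  using assms unfolding rep_def by simp

lemma coset_left_mult:
  assumes "h \<in> carrier H" "y \<in> carrier K"
  shows "Hsub #>\<^bsub>K\<^esub> (\<psi> h \<otimes>\<^bsub>K\<^esub> y) = Hsub #>\<^bsub>K\<^esub> y"
proof -
  have "Hsub #>\<^bsub>K\<^esub> (\<psi> h \<otimes>\<^bsub>K\<^esub> y) = (Hsub #>\<^bsub>K\<^esub> \<psi> h) #>\<^bsub>K\<^esub> y"
    using assms by (simp add: H.coset_mult_assoc image_subsetI)
  also have "Hsub #>\<^bsub>K\<^esub> \<psi> h = Hsub"
    using assms(1) by (simp add: subgroup.rcos_const[OF Hsub_subgroup H.is_group])
  finally show ?thesis .
qed

lemma rep_left_mult: "h \<in> carrier H \<Longrightarrow> y \<in> carrier K \<Longrightarrow> rep (\<psi> h \<otimes>\<^bsub>K\<^esub> y) = rep y"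
  by (rule rep_coset_cong[OF _ _ coset_left_mult]) simp_all

lemma rep_Hsub: assumes "y \<in> Hsub" shows "rep y = \<one>\<^bsub>K\<^esub>"
proof -
  have "y \<in> carrier K" using assms by auto
  thus ?thesis unfolding rep_def using coset_eq_Hsub_iff assms by simp
qed

lemma rep_idem: "y \<in> carrier K \<Longrightarrow> rep (rep y) = rep y"
  by (rule rep_coset_cong[OF rep_closed _ coset_rep]) (simp_all add: rep_closed)

lemma rep_notin_Hsub: "y \<in> carrier K \<Longrightarrow> y \<notin> Hsub \<Longrightarrow> rep y \<notin> Hsub"
  using coset_eq_Hsub_iff[of y] coset_eq_Hsub_iff[OF rep_closed, of y] coset_rep[of y] by simp

lemma coset_decomposition:
  assumes "y \<in> carrier K"
  shows "coeff y \<in> carrier H" "\<psi> (coeff y) \<otimes>\<^bsub>K\<^esub> rep y = y"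
proof -
  obtain h where h: "h \<in> Hsub" "rep y = h \<otimes>\<^bsub>K\<^esub> y"
    using rep_in_coset[OF assms] unfolding r_coset_def by blast
  have "y \<otimes>\<^bsub>K\<^esub> inv\<^bsub>K\<^esub> rep y = inv\<^bsub>K\<^esub> h"
    using h assms subgroup.subset[OF Hsub_subgroup]
    by (simp add: H.inv_mult_group H.m_assoc[symmetric] subset_iff)
  moreover have "inv\<^bsub>K\<^esub> h \<in> Hsub" using h(1) by (rule subgroup.m_inv_closed[OF Hsub_subgroup])
  ultimately have e: "\<psi> (coeff y) = y \<otimes>\<^bsub>K\<^esub> inv\<^bsub>K\<^esub> rep y" "coeff y \<in> carrier H"
    unfolding coeff_def using inj by (simp_all add: f_the_inv_into_f the_inv_into_into)
  show "coeff y \<in> carrier H" by (fact e(2))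
  show "\<psi> (coeff y) \<otimes>\<^bsub>K\<^esub> rep y = y"
    using assms rep_closed[OF assms] by (simp add: e(1) H.m_assoc)
qed

lemma coeff_left_mult:
  assumes "h \<in> carrier H" "c \<in> carrier K" "rep c = c"
  shows "coeff (\<psi> h \<otimes>\<^bsub>K\<^esub> c) = h"
proof -
  have y: "\<psi> h \<otimes>\<^bsub>K\<^esub> c \<in> carrier K" using assms by simp
  have "\<psi> (coeff (\<psi> h \<otimes>\<^bsub>K\<^esub> c)) \<otimes>\<^bsub>K\<^esub> c = \<psi> h \<otimes>\<^bsub>K\<^esub> c"
    using coset_decomposition(2)[OF y] rep_left_mult[OF assms(1,2)] assms(3) by simp
  hence "\<psi> (coeff (\<psi> h \<otimes>\<^bsub>K\<^esub> c)) = \<psi> h"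
    using assms coset_decomposition(1)[OF y] by (simp add: H.r_cancel)
  thus ?thesis using inj assms(1) coset_decomposition(1)[OF y] by (auto dest: inj_onD)
qed

lemma coeff_Hsub: "h \<in> carrier H \<Longrightarrow> coeff (\<psi> h) = h"
  using coeff_left_mult[of h "\<one>\<^bsub>K\<^esub>"] rep_Hsub[of "\<one>\<^bsub>K\<^esub>"] subgroup.one_closed[OF Hsub_subgroup] by simp

lemma left_mult_in_Hsub_iff:
  "h \<in> carrier H \<Longrightarrow> y \<in> carrier K \<Longrightarrow> \<psi> h \<otimes>\<^bsub>K\<^esub> y \<in> Hsub \<longleftrightarrow> y \<in> Hsub"
  using coset_eq_Hsub_iff[of y] coset_eq_Hsub_iff[of "\<psi> h \<otimes>\<^bsub>K\<^esub> y"] coset_left_mult[of h y] by simp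

lemma right_mult_in_Hsub_iff:
  assumes "h \<in> carrier H" "y \<in> carrier K"
  shows "y \<otimes>\<^bsub>K\<^esub> \<psi> h \<in> Hsub \<longleftrightarrow> y \<in> Hsub"
proof -
  have "\<psi> h \<in> Hsub" using assms(1) by blast
  thus ?thesis using subgroup.m_closed[OF Hsub_subgroup] subgroup.m_inv_closed[OF Hsub_subgroup] assms
    by (metis H.inv_solve_right hom_closed subgroup.mem_carrier[OF Hsub_subgroup] H.m_closed)
qed

definition normal_letter :: "'c \<Rightarrow> bool" where
  "normal_letter c \<longleftrightarrow> c \<in> carrier K \<and> c \<notin> Hsub \<and> rep c = c"

end

text \<open>One factor K of the amalgam, seen from its side: words are lists over 'w, side z tells
  whether the letter z comes from K or from the other factor L, and inK/outK, inL/outL embed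
  and extract letters.\<close>
locale amalgam_side = A: transversal H K \<psi> + B: transversal H L \<chi>
  for H :: "('h, 'e) monoid_scheme" and K :: "('k, 'c) monoid_scheme" and \<psi> :: "'h \<Rightarrow> 'k"
    and L :: "('l, 'd) monoid_scheme" and \<chi> :: "'h \<Rightarrow> 'l" +
  fixes side :: "'w \<Rightarrow> bool"
    and inK :: "'k \<Rightarrow> 'w" and outK :: "'w \<Rightarrow> 'k" and inL :: "'l \<Rightarrow> 'w" and outL :: "'w \<Rightarrow> 'l"
  assumes side_inK [simp]: "side (inK c)" and side_inL [simp]: "\<not> side (inL d)"
    and outK_inK [simp]: "outK (inK c) = c" and outL_inL [simp]: "outL (inL d) = d"
    and inK_outK: "side z \<Longrightarrow> inK (outK z) = z" and inL_outL: "\<not> side z \<Longrightarrow> inL (outL z) = z"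
begin

definition letter_ok :: "'w \<Rightarrow> bool" where
  "letter_ok z \<longleftrightarrow> (if side z then A.normal_letter (outK z) else B.normal_letter (outL z))"

definition alternating :: "'w list \<Rightarrow> bool" where
  "alternating t \<longleftrightarrow> successively (\<lambda>x y. side x \<noteq> side y) t"

definition normal :: "'w list \<Rightarrow> bool" where
  "normal t \<longleftrightarrow> alternating t \<and> (\<forall>z\<in>set t. letter_ok z)"

definition NF :: "('h \<times> 'w list) set" where
  "NF = {(h, t). h \<in> carrier H \<and> normal t}"

definition starts_K :: "'w list \<Rightarrow> bool" where
  "starts_K t \<longleftrightarrow> t \<noteq> [] \<and> side (hd t)"

definition K_part :: "'h \<times> 'w list \<Rightarrow> 'k" where
  "K_part w = (if starts_K (snd w) then \<psi> (fst w) \<otimes>\<^bsub>K\<^esub> outK (hd (snd w)) else \<psi> (fst w))"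

definition K_tail :: "'w list \<Rightarrow> 'w list" where
  "K_tail t = (if starts_K t then tl t else t)"

definition build :: "'k \<Rightarrow> 'w list \<Rightarrow> 'h \<times> 'w list" where
  "build z t = (A.coeff z, if z \<in> A.Hsub then t else inK (A.rep z) # t)"

text \<open>x acts by multiplying the K-part of a normal form (the H-coefficient together with a leading
  K-letter) and splitting the product again into coefficient and coset representative.\<close>
definition act :: "'k \<Rightarrow> 'h \<times> 'w list \<Rightarrow> 'h \<times> 'w list" where
  "act x w = build (x \<otimes>\<^bsub>K\<^esub> K_part w) (K_tail (snd w))"

lemma normal_Nil [simp]: "normal []"
  by (simp add: normal_def alternating_def)

lemma normal_Cons:
  "normal (z # t) \<longleftrightarrow> letter_ok z \<and> normal t \<and> (t \<noteq> [] \<longrightarrow> side (hd t) \<noteq> side z)"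
  unfolding normal_def alternating_def successively_Cons by auto

lemma normal_inK_Cons:
  "normal (inK c # t) \<longleftrightarrow> A.normal_letter c \<and> \<not> starts_K t \<and> normal t"
  unfolding normal_Cons letter_ok_def starts_K_def by auto

lemma NF_K_tail: "w \<in> NF \<Longrightarrow> normal (K_tail (snd w)) \<and> \<not> starts_K (K_tail (snd w))"
  unfolding NF_def K_tail_def starts_K_def
  by (cases "snd w") (auto simp: normal_Cons letter_ok_def)

lemma K_part_closed: "w \<in> NF \<Longrightarrow> K_part w \<in> carrier K"
  unfolding NF_def K_part_def starts_K_def
  by (cases "snd w") (auto simp: normal_Cons letter_ok_def A.normal_letter_def)

lemma build_NF:
  assumes "z \<in> carrier K" "normal t" "\<not> starts_K t"
  shows "build z t \<in> NF"
proof -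
  have "A.normal_letter (A.rep z)" if "z \<notin> A.Hsub"
    unfolding A.normal_letter_def using assms(1) that
    by (simp add: A.rep_closed A.rep_notin_Hsub A.rep_idem)
  thus ?thesis unfolding build_def NF_def using assms A.coset_decomposition(1)[OF assms(1)]
    by (simp add: normal_inK_Cons)
qed

lemma K_part_build: "z \<in> carrier K \<Longrightarrow> \<not> starts_K t \<Longrightarrow> K_part (build z t) = z"
  unfolding K_part_def build_def starts_K_def
  using A.coset_decomposition[of z] A.rep_Hsub[of z] by auto

lemma K_tail_build: "\<not> starts_K t \<Longrightarrow> K_tail (snd (build z t)) = t"
  unfolding K_tail_def build_def starts_K_def by auto

lemma build_K_part: assumes "w \<in> NF" shows "build (K_part w) (K_tail (snd w)) = w"
proof -
  obtain h t where w: "w = (h, t)" "h \<in> carrier H" "normal t" using assms unfolding NF_def by blast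
  show ?thesis
  proof (cases "starts_K t")
    case True
    then obtain c r where t: "t = inK c # r" unfolding starts_K_def using inK_outK
      by (metis list.collapse)
    have c: "c \<in> carrier K" "c \<notin> A.Hsub" "A.rep c = c"
      using w(3) unfolding t normal_inK_Cons A.normal_letter_def by auto
    have "\<psi> h \<otimes>\<^bsub>K\<^esub> c \<notin> A.Hsub" using A.left_mult_in_Hsub_iff[OF w(2) c(1)] c(2) by simp
    thus ?thesis unfolding build_def K_part_def K_tail_def w(1) t starts_K_def
      using A.coeff_left_mult[OF w(2) c(1,3)] A.rep_left_mult[OF w(2) c(1)] c(3) by simp
  next
    case False
    thus ?thesis unfolding build_def K_part_def K_tail_def w(1) using A.coeff_Hsub[OF w(2)] w(2) by auto
  qed
qed

lemma act_NF: "x \<in> carrier K \<Longrightarrow> w \<in> NF \<Longrightarrow> act x w \<in> NF"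
  unfolding act_def using build_NF K_part_closed NF_K_tail by simp

lemma act_mult:
  assumes "x \<in> carrier K" "y \<in> carrier K" "w \<in> NF"
  shows "act x (act y w) = act (x \<otimes>\<^bsub>K\<^esub> y) w"
proof -
  have z: "y \<otimes>\<^bsub>K\<^esub> K_part w \<in> carrier K" using assms K_part_closed by simp
  have t: "\<not> starts_K (K_tail (snd w))" using NF_K_tail[OF assms(3)] by simp
  show ?thesis unfolding act_def[of y] unfolding act_def
    using K_part_build[OF z t] K_tail_build[OF t] assms K_part_closed by (simp add: A.H.m_assoc)
qed

lemma act_one: "w \<in> NF \<Longrightarrow> act \<one>\<^bsub>K\<^esub> w = w"
  unfolding act_def using build_K_part K_part_closed by simp

lemma K_part_Hsub_mult:
  assumes "h \<in> carrier H" "(h', t) \<in> NF"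
  shows "K_part (h \<otimes>\<^bsub>H\<^esub> h', t) = \<psi> h \<otimes>\<^bsub>K\<^esub> K_part (h', t)"
proof -
  have h': "h' \<in> carrier H" using assms(2) unfolding NF_def by simp
  have "outK (hd t) \<in> carrier K" if "starts_K t"
    using assms(2) that unfolding NF_def starts_K_def
    by (cases t) (auto simp: normal_Cons letter_ok_def A.normal_letter_def)
  thus ?thesis unfolding K_part_def using assms(1) h' by (simp add: A.H.m_assoc)
qed

lemma act_Hsub:
  assumes "h \<in> carrier H" "(h', t) \<in> NF"
  shows "act (\<psi> h) (h', t) = (h \<otimes>\<^bsub>H\<^esub> h', t)"
proof -
  have "(h \<otimes>\<^bsub>H\<^esub> h', t) \<in> NF" using assms unfolding NF_def by simp
  hence "build (K_part (h \<otimes>\<^bsub>H\<^esub> h', t)) (K_tail t) = (h \<otimes>\<^bsub>H\<^esub> h', t)"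
    using build_K_part by fastforce
  thus ?thesis unfolding act_def by (simp add: K_part_Hsub_mult[OF assms])
qed

lemma act_grow:
  assumes "x \<in> carrier K" "x \<notin> A.Hsub" "(h, t) \<in> NF" "\<not> starts_K t"
  shows "\<exists>h' c. act x (h, t) = (h', inK c # t)"
proof -
  have h: "h \<in> carrier H" using assms(3) unfolding NF_def by simp
  have "x \<otimes>\<^bsub>K\<^esub> \<psi> h \<notin> A.Hsub" using A.right_mult_in_Hsub_iff[OF h assms(1)] assms(2) by simp
  thus ?thesis unfolding act_def build_def K_part_def K_tail_def using assms(4) by auto
qed

definition act_perm :: "'k \<Rightarrow> ('h \<times> 'w list \<Rightarrow> 'h \<times> 'w list)" where
  "act_perm x = restrict (act x) NF"

lemma act_perm_Bij: assumes "x \<in> carrier K" shows "act_perm x \<in> Bij NF"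
proof -
  have "bij_betw (act x) NF NF"
    by (rule bij_betw_byWitness[where f'="act (inv\<^bsub>K\<^esub> x)"])
       (use assms act_NF act_mult act_one in \<open>auto simp: A.H.l_inv A.H.r_inv\<close>)
  thus ?thesis unfolding Bij_def act_perm_def by (simp add: bij_betw_restrict_eq)
qed

lemma act_perm_hom: "act_perm \<in> hom K (BijGroup NF)"
proof (rule homI)
  fix x assume "x \<in> carrier K"
  thus "act_perm x \<in> carrier (BijGroup NF)" using act_perm_Bij by (simp add: BijGroup_def)
next
  fix x y assume xy: "x \<in> carrier K" "y \<in> carrier K"
  have "act_perm (x \<otimes>\<^bsub>K\<^esub> y) = compose NF (act_perm x) (act_perm y)"
    unfolding act_perm_def compose_def using act_mult[OF xy] act_NF xy by (auto intro!: ext)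
  thus "act_perm (x \<otimes>\<^bsub>K\<^esub> y) = act_perm x \<otimes>\<^bsub>BijGroup NF\<^esub> act_perm y"
    using act_perm_Bij xy by (simp add: BijGroup_def)
qed

lemma act_perm_Hsub: "h \<in> carrier H \<Longrightarrow> act_perm (\<psi> h) = restrict (\<lambda>(h', t). (h \<otimes>\<^bsub>H\<^esub> h', t)) NF"
  unfolding act_perm_def using act_Hsub by (auto intro!: ext)

end

locale amalgam_side_hom = amalgam_side H K \<psi> L \<chi> side inK outK inL outL
    + G: group G + IK: group_hom K G iK + IL: group_hom L G iL
  for H :: "('h, 'e) monoid_scheme" and K :: "('k, 'c) monoid_scheme" and \<psi>
    and L :: "('l, 'd) monoid_scheme" and \<chi> and side :: "'w \<Rightarrow> bool" and inK outK inL outL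
    and G :: "('g, 'f) monoid_scheme" and iK and iL +
  assumes compat: "h \<in> carrier H \<Longrightarrow> iK (\<psi> h) = iL (\<chi> h)"
begin

definition emb :: "'w \<Rightarrow> 'g" where
  "emb z = (if side z then iK (outK z) else iL (outL z))"

definition word_val :: "'w list \<Rightarrow> 'g" where
  "word_val t = list_prod G (map emb t)"

definition eval :: "'h \<times> 'w list \<Rightarrow> 'g" where
  "eval w = iK (\<psi> (fst w)) \<otimes>\<^bsub>G\<^esub> word_val (snd w)"

definition reduced_letter :: "'w \<Rightarrow> bool" where
  "reduced_letter z \<longleftrightarrow> (if side z then outK z \<in> carrier K - A.Hsub else outL z \<in> carrier L - B.Hsub)"

definition reduced :: "'w list \<Rightarrow> bool" where
  "reduced t \<longleftrightarrow> alternating t \<and> (\<forall>z\<in>set t. reduced_letter z)"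

lemma reduced_Nil [simp]: "reduced []"
  by (simp add: reduced_def alternating_def)

lemma emb_closed: "reduced_letter z \<Longrightarrow> emb z \<in> carrier G"
  unfolding reduced_letter_def emb_def by (auto split: if_splits)

lemma word_val_Nil [simp]: "word_val [] = \<one>\<^bsub>G\<^esub>"
  by (simp add: word_val_def)

lemma word_val_Cons: "word_val (z # t) = emb z \<otimes>\<^bsub>G\<^esub> word_val t"
  by (simp add: word_val_def)

lemma word_val_closed: "\<forall>z\<in>set t. reduced_letter z \<Longrightarrow> word_val t \<in> carrier G"
  unfolding word_val_def using emb_closed by (intro G.list_prod_closed) auto

lemma word_val_append:
  "\<forall>z\<in>set t. reduced_letter z \<Longrightarrow> \<forall>z\<in>set t'. reduced_letter z \<Longrightarrow>
    word_val (t @ t') = word_val t \<otimes>\<^bsub>G\<^esub> word_val t'"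
  unfolding word_val_def map_append using emb_closed by (intro G.list_prod_append) auto

lemma word_val_single: "reduced_letter z \<Longrightarrow> word_val [z] = emb z"
  by (simp add: word_val_Cons emb_closed)

lemma normal_imp_reduced: "normal t \<Longrightarrow> reduced t"
  unfolding normal_def reduced_def letter_ok_def reduced_letter_def A.normal_letter_def
    B.normal_letter_def by (auto split: if_splits)

lemma reduced_Cons:
  "reduced (z # t) \<longleftrightarrow> reduced_letter z \<and> reduced t \<and> (t \<noteq> [] \<longrightarrow> side (hd t) \<noteq> side z)"
  unfolding reduced_def alternating_def successively_Cons by auto

lemma reduced_word_val_closed: "reduced t \<Longrightarrow> word_val t \<in> carrier G"
  unfolding reduced_def by (simp add: word_val_closed)

lemma eval_closed: "w \<in> NF \<Longrightarrow> eval w \<in> carrier G"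
  unfolding NF_def eval_def using normal_imp_reduced reduced_word_val_closed by auto

lemma eval_build:
  assumes z: "z \<in> carrier K" and t: "normal t"
  shows "eval (build z t) = iK z \<otimes>\<^bsub>G\<^esub> word_val t"
proof -
  note dec = A.coset_decomposition[OF z]
  have rep: "A.rep z \<in> carrier K" using A.rep_closed[OF z] .
  have w: "word_val t \<in> carrier G" using reduced_word_val_closed[OF normal_imp_reduced[OF t]] .
  show ?thesis
  proof (cases "z \<in> A.Hsub")
    case True
    thus ?thesis unfolding build_def eval_def using dec A.rep_Hsub[OF True] by simp
  next
    case False
    have "eval (build z t) = iK (\<psi> (A.coeff z)) \<otimes>\<^bsub>G\<^esub> (iK (A.rep z) \<otimes>\<^bsub>G\<^esub> word_val t)"
      using False unfolding build_def eval_def by (simp add: word_val_Cons emb_def)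
    also have "\<dots> = iK (\<psi> (A.coeff z) \<otimes>\<^bsub>K\<^esub> A.rep z) \<otimes>\<^bsub>G\<^esub> word_val t"
      using dec(1) rep w by (simp add: G.m_assoc)
    finally show ?thesis using dec(2) by simp
  qed
qed

lemma eval_act:
  assumes x: "x \<in> carrier K" and w: "w \<in> NF"
  shows "eval (act x w) = iK x \<otimes>\<^bsub>G\<^esub> eval w"
proof -
  have p: "K_part w \<in> carrier K" using K_part_closed[OF w] .
  have t: "normal (K_tail (snd w))" using NF_K_tail[OF w] by simp
  have v: "word_val (K_tail (snd w)) \<in> carrier G"
    using reduced_word_val_closed[OF normal_imp_reduced[OF t]] .
  have "eval w = iK (K_part w) \<otimes>\<^bsub>G\<^esub> word_val (K_tail (snd w))"
    using eval_build[OF p t] build_K_part[OF w] by simp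
  moreover have "eval (act x w) = iK (x \<otimes>\<^bsub>K\<^esub> K_part w) \<otimes>\<^bsub>G\<^esub> word_val (K_tail (snd w))"
    unfolding act_def using x p t by (simp add: eval_build)
  ultimately show ?thesis using x p v by (simp add: G.m_assoc)
qed

lemma reduced_snoc:
  "reduced (zs @ [z]) \<longleftrightarrow> reduced zs \<and> reduced_letter z \<and> (zs \<noteq> [] \<longrightarrow> side (last zs) \<noteq> side z)"
  unfolding reduced_def alternating_def successively_append_iff by auto

lemma side_hd_snoc: "side a = side b \<Longrightarrow> side (hd (zs @ [a])) = side (hd (zs @ b # rest))"
  by (cases zs) simp_all

lemma absorb_into_L_letter:
  assumes red: "reduced (zs @ [inL d])" and h: "h \<in> carrier H"
  shows "reduced (zs @ [inL (d \<otimes>\<^bsub>L\<^esub> \<chi> h)])"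
    "word_val (zs @ [inL d]) \<otimes>\<^bsub>G\<^esub> iK (\<psi> h) = word_val (zs @ [inL (d \<otimes>\<^bsub>L\<^esub> \<chi> h)])"
proof -
  have d: "d \<in> carrier L" "d \<notin> B.Hsub" and zs: "reduced zs"
    using red unfolding reduced_snoc reduced_letter_def by auto
  have "d \<otimes>\<^bsub>L\<^esub> \<chi> h \<notin> B.Hsub" using B.right_mult_in_Hsub_iff[OF h d(1)] d(2) by simp
  thus "reduced (zs @ [inL (d \<otimes>\<^bsub>L\<^esub> \<chi> h)])"
    using red h d(1) unfolding reduced_snoc reduced_letter_def by simp
  have letters: "\<forall>z\<in>set zs. reduced_letter z" using zs unfolding reduced_def by simp
  have "reduced_letter (inL d)" "reduced_letter (inL (d \<otimes>\<^bsub>L\<^esub> \<chi> h))"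
    using d h \<open>d \<otimes>\<^bsub>L\<^esub> \<chi> h \<notin> B.Hsub\<close> unfolding reduced_letter_def by simp_all
  thus "word_val (zs @ [inL d]) \<otimes>\<^bsub>G\<^esub> iK (\<psi> h) = word_val (zs @ [inL (d \<otimes>\<^bsub>L\<^esub> \<chi> h)])"
    using letters d h compat[OF h]
    by (simp add: word_val_append word_val_single emb_def word_val_closed G.m_assoc)
qed

lemma mult_after_K_letter:
  assumes red: "reduced (zs @ [inK c])" and y: "y \<in> carrier K"
  shows "\<exists>h' ys'. h' \<in> carrier H \<and> reduced ys' \<and>
    word_val (zs @ [inK c]) \<otimes>\<^bsub>G\<^esub> iK y = iK (\<psi> h') \<otimes>\<^bsub>G\<^esub> word_val ys' \<and>
    (ys' \<noteq> [] \<longrightarrow> side (hd ys') = side (hd (zs @ [inK c])))"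
proof -
  have c: "c \<in> carrier K" and zs: "reduced zs" using red unfolding reduced_snoc reduced_letter_def by auto
  have letters: "\<forall>z\<in>set zs. reduced_letter z" using zs unfolding reduced_def by simp
  define z where "z = c \<otimes>\<^bsub>K\<^esub> y"
  have zc: "z \<in> carrier K" using c y unfolding z_def by simp
  have merge: "word_val (zs @ [inK c]) \<otimes>\<^bsub>G\<^esub> iK y = word_val zs \<otimes>\<^bsub>G\<^esub> iK z"
    using red letters c y unfolding reduced_snoc z_def
    by (simp add: word_val_append word_val_single emb_def word_val_closed G.m_assoc)
  show ?thesis
  proof (cases "z \<in> A.Hsub")
    case False
    have "reduced_letter (inK z)" using zc False unfolding reduced_letter_def by simp
    hence "reduced (zs @ [inK z])" using red unfolding reduced_snoc by simp
    moreover have "word_val (zs @ [inK c]) \<otimes>\<^bsub>G\<^esub> iK y = iK (\<psi> \<one>\<^bsub>H\<^esub>) \<otimes>\<^bsub>G\<^esub> word_val (zs @ [inK z])"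
      using merge letters zc \<open>reduced_letter (inK z)\<close>
      by (simp add: word_val_append word_val_single emb_def word_val_closed)
    moreover have "side (hd (zs @ [inK z])) = side (hd (zs @ [inK c]))" using side_hd_snoc by simp
    ultimately show ?thesis by blast
  next
    case True
    then obtain h where h: "h \<in> carrier H" "z = \<psi> h" by blast
    show ?thesis
    proof (cases zs rule: rev_exhaust)
      case Nil
      hence "word_val (zs @ [inK c]) \<otimes>\<^bsub>G\<^esub> iK y = iK (\<psi> h) \<otimes>\<^bsub>G\<^esub> word_val []"
        using merge h by simp
      thus ?thesis using h(1) by (intro exI[of _ h] exI[of _ "[]"]) (simp add: reduced_def alternating_def)
    next
      case (snoc zs0 l)
      hence "\<not> side l" using red unfolding reduced_snoc by simp
      then obtain d where l: "l = inL d" using inL_outL by metis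
      have red0: "reduced (zs0 @ [inL d])" using zs snoc l by simp
      have "word_val (zs @ [inK c]) \<otimes>\<^bsub>G\<^esub> iK y
          = iK (\<psi> \<one>\<^bsub>H\<^esub>) \<otimes>\<^bsub>G\<^esub> word_val (zs0 @ [inL (d \<otimes>\<^bsub>L\<^esub> \<chi> h)])"
        using merge snoc l h absorb_into_L_letter(2)[OF red0 h(1)]
          reduced_word_val_closed[OF absorb_into_L_letter(1)[OF red0 h(1)]] by simp
      moreover have "side (hd (zs0 @ [inL (d \<otimes>\<^bsub>L\<^esub> \<chi> h)])) = side (hd (zs @ [inK c]))"
        using side_hd_snoc[of "inL (d \<otimes>\<^bsub>L\<^esub> \<chi> h)" "inL d" zs0 "[inK c]"] snoc l by simp
      ultimately show ?thesis using absorb_into_L_letter(1)[OF red0 h(1)] by blast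
    qed
  qed
qed

lemma mult_after_L_letter:
  assumes red: "reduced (zs @ [inL d])" and y: "y \<in> carrier K"
  shows "\<exists>h' ys'. h' \<in> carrier H \<and> reduced ys' \<and>
    word_val (zs @ [inL d]) \<otimes>\<^bsub>G\<^esub> iK y = iK (\<psi> h') \<otimes>\<^bsub>G\<^esub> word_val ys' \<and>
    (ys' \<noteq> [] \<longrightarrow> side (hd ys') = side (hd (zs @ [inL d])))"
proof (cases "y \<in> A.Hsub")
  case False
  let ?ys' = "(zs @ [inL d]) @ [inK y]"
  have "reduced_letter (inK y)" using y False unfolding reduced_letter_def by simp
  hence "reduced ?ys'" using red unfolding reduced_snoc[of "zs @ [inL d]"] by simp
  moreover have "word_val ?ys' = word_val (zs @ [inL d]) \<otimes>\<^bsub>G\<^esub> iK y"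
    using red \<open>reduced_letter (inK y)\<close> word_val_append[of "zs @ [inL d]" "[inK y]"]
    unfolding reduced_def by (simp add: word_val_single emb_def)
  hence "word_val (zs @ [inL d]) \<otimes>\<^bsub>G\<^esub> iK y = iK (\<psi> \<one>\<^bsub>H\<^esub>) \<otimes>\<^bsub>G\<^esub> word_val ?ys'"
    using reduced_word_val_closed[OF \<open>reduced ?ys'\<close>] by simp
  moreover have "side (hd ?ys') = side (hd (zs @ [inL d]))" by (cases zs) simp_all
  ultimately show ?thesis by blast
next
  case True
  then obtain h where h: "h \<in> carrier H" "y = \<psi> h" by blast
  have "word_val (zs @ [inL d]) \<otimes>\<^bsub>G\<^esub> iK y = iK (\<psi> \<one>\<^bsub>H\<^esub>) \<otimes>\<^bsub>G\<^esub> word_val (zs @ [inL (d \<otimes>\<^bsub>L\<^esub> \<chi> h)])"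
    using h absorb_into_L_letter(2)[OF red h(1)]
      reduced_word_val_closed[OF absorb_into_L_letter(1)[OF red h(1)]] by simp
  moreover have "side (hd (zs @ [inL (d \<otimes>\<^bsub>L\<^esub> \<chi> h)])) = side (hd (zs @ [inL d]))"
    using side_hd_snoc[of _ _ zs "[]"] by simp
  ultimately show ?thesis using absorb_into_L_letter(1)[OF red h(1)] h(1) by blast
qed

lemma reduced_mult_K:
  assumes "reduced ys" "ys \<noteq> []" "y \<in> carrier K"
  shows "\<exists>h' ys'. h' \<in> carrier H \<and> reduced ys' \<and>
    word_val ys \<otimes>\<^bsub>G\<^esub> iK y = iK (\<psi> h') \<otimes>\<^bsub>G\<^esub> word_val ys' \<and>
    (ys' \<noteq> [] \<longrightarrow> side (hd ys') = side (hd ys))"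
proof -
  obtain zs z where ys: "ys = zs @ [z]" using assms(2) by (metis rev_exhaust)
  show ?thesis
  proof (cases "side z")
    case True
    thus ?thesis using mult_after_K_letter[of zs "outK z"] assms inK_outK[OF True] ys by simp
  next
    case False
    thus ?thesis using mult_after_L_letter[of zs "outL z"] assms inL_outL[OF False] ys by simp
  qed
qed

end

lemma finitely_generated_countable: "group G \<Longrightarrow> finitely_generated G \<Longrightarrow> countable (carrier G)"
  unfolding finitely_generated_def using group.countable_generate countable_finite by metis

lemma countable_group_iso_nat_group:
  assumes "group K" "countable (carrier K)"
  obtains N :: "nat monoid" and e where "group N" "e \<in> iso K N"
proof -
  interpret K: group K by fact
  define e where "e = to_nat_on (carrier K)"
  define d where "d = inv_into (carrier K) e"
  have inj: "inj_on e (carrier K)" unfolding e_def using assms(2) by (rule inj_on_to_nat_on)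
  have de: "d (e x) = x" if "x \<in> carrier K" for x unfolding d_def using inj that by simp
  have d: "d n \<in> carrier K" if "n \<in> e ` carrier K" for n using that de by auto
  define N :: "nat monoid" where
    "N = \<lparr>carrier = e ` carrier K, monoid.mult = \<lambda>a b. e (d a \<otimes>\<^bsub>K\<^esub> d b), one = e \<one>\<^bsub>K\<^esub>\<rparr>"
  have "monoid N"
    by (rule monoidI) (auto simp: N_def de d K.m_assoc)
  moreover have "e \<in> iso K N"
    unfolding iso_def bij_betw_def using inj by (auto intro!: homI simp: N_def de)
  ultimately have "group N" using K.iso_imp_group[OF is_isoI] by blast
  thus thesis using \<open>e \<in> iso K N\<close> by (rule that)
qed

text \<open>The definition of an amalgamated product quantifies only over target groups carried by
  the natural numbers; maps into any group whose relevant part is countable still factor, by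
  transporting the countable subgroup generated by their images to the natural numbers.\<close>
lemma amalgamated_product_factor_countable:
  assumes amalg: "is_amalgamated_product G G1 G2 H \<phi>1 \<phi>2 i1 i2"
    and K: "group K" and f1: "f1 \<in> hom G1 K" and f2: "f2 \<in> hom G2 K"
    and compat: "\<forall>h\<in>carrier H. f1 (\<phi>1 h) = f2 (\<phi>2 h)"
    and cnt: "countable (f1 ` carrier G1 \<union> f2 ` carrier G2)"
  shows "\<exists>f\<in>hom G K. (\<forall>x\<in>carrier G1. f (i1 x) = f1 x) \<and> (\<forall>x\<in>carrier G2. f (i2 x) = f2 x)"
proof -
  interpret K: group K by fact
  define C where "C = generate K (f1 ` carrier G1 \<union> f2 ` carrier G2)"
  have gens: "f1 ` carrier G1 \<union> f2 ` carrier G2 \<subseteq> carrier K"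
    using f1 f2 by (auto simp: hom_def)
  have C: "subgroup C K" unfolding C_def by (rule K.generate_is_subgroup[OF gens])
  have f1C: "f1 x \<in> C" if "x \<in> carrier G1" for x unfolding C_def using that by (auto intro: generate.incl)
  have f2C: "f2 x \<in> C" if "x \<in> carrier G2" for x unfolding C_def using that by (auto intro: generate.incl)
  define K' where "K' = K\<lparr>carrier := C\<rparr>"
  have "group K'" unfolding K'_def by (rule K.subgroup_imp_group[OF C])
  moreover have "countable (carrier K')" unfolding K'_def C_def using K.countable_generate[OF gens cnt] by simp
  ultimately obtain N :: "nat monoid" and e where N: "group N" and e: "e \<in> iso K' N"
    by (rule countable_group_iso_nat_group)
  have "f1 \<in> hom G1 K'" "f2 \<in> hom G2 K'"
    using f1 f2 f1C f2C unfolding K'_def hom_def by auto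
  hence "group N \<and> e \<circ> f1 \<in> hom G1 N \<and> e \<circ> f2 \<in> hom G2 N \<and>
      (\<forall>h\<in>carrier H. (e \<circ> f1) (\<phi>1 h) = (e \<circ> f2) (\<phi>2 h))"
    using N e compat by (auto intro: hom_compose simp: iso_def)
  moreover have "\<forall>(N :: nat monoid) g1 g2. group N \<and> g1 \<in> hom G1 N \<and> g2 \<in> hom G2 N \<and>
      (\<forall>h\<in>carrier H. g1 (\<phi>1 h) = g2 (\<phi>2 h)) \<longrightarrow>
      (\<exists>g \<in> hom G N. (\<forall>x\<in>carrier G1. g (i1 x) = g1 x) \<and> (\<forall>x\<in>carrier G2. g (i2 x) = g2 x))"
    using amalg unfolding is_amalgamated_product_def by (elim conjE)
  ultimately have "\<exists>g \<in> hom G N. (\<forall>x\<in>carrier G1. g (i1 x) = (e \<circ> f1) x) \<and>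
      (\<forall>x\<in>carrier G2. g (i2 x) = (e \<circ> f2) x)"
    by blast
  then obtain g where g: "g \<in> hom G N" "\<forall>x\<in>carrier G1. g (i1 x) = e (f1 x)"
    "\<forall>x\<in>carrier G2. g (i2 x) = e (f2 x)" by auto
  define d where "d = inv_into C e"
  have "d \<in> iso N K'" unfolding d_def using group.iso_set_sym[OF \<open>group K'\<close> e] by (simp add: K'_def)
  hence "d \<circ> g \<in> hom G K'" using g(1) by (auto intro: hom_compose simp: iso_def)
  hence "d \<circ> g \<in> hom G K" using subgroup.subset[OF C] unfolding K'_def hom_def by auto
  moreover have "inj_on e C" using e unfolding iso_def bij_betw_def K'_def by simp
  hence "d (e y) = y" if "y \<in> C" for y unfolding d_def using that by simp
  ultimately show ?thesis using g f1C f2C by (intro bexI[of _ "d \<circ> g"]) auto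
qed

locale amalgam = T1: transversal H G1 \<phi>1 + T2: transversal H G2 \<phi>2
    + G: group G + I1: group_hom G1 G i1 + I2: group_hom G2 G i2
  for H :: "('h, 'e) monoid_scheme" and G1 :: "('a, 'c) monoid_scheme" and \<phi>1
    and G2 :: "('b, 'd) monoid_scheme" and \<phi>2 and G :: "('g, 'f) monoid_scheme" and i1 i2 +
  assumes compat: "h \<in> carrier H \<Longrightarrow> i1 (\<phi>1 h) = i2 (\<phi>2 h)"

sublocale amalgam \<subseteq> S1: amalgam_side_hom H G1 \<phi>1 G2 \<phi>2 isl Inl projl Inr projr G i1 i2
  by unfold_locales (auto simp: compat)

sublocale amalgam \<subseteq> S2: amalgam_side_hom H G2 \<phi>2 G1 \<phi>1 "\<lambda>z. \<not> isl z" Inr projr Inl projl G i2 i1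
  by unfold_locales (auto simp: compat)

context amalgam
begin

lemma S2_alternating: "S2.alternating = S1.alternating"
  unfolding S1.alternating_def S2.alternating_def by simp

lemma S2_normal: "S2.normal = S1.normal"
proof -
  have "S2.letter_ok z = S1.letter_ok z" for z
    unfolding S1.letter_ok_def S2.letter_ok_def by (cases z) simp_all
  thus ?thesis unfolding S1.normal_def S2.normal_def S2_alternating by simp
qed

lemma S2_NF: "S2.NF = S1.NF"
  unfolding S1.NF_def S2.NF_def S2_normal ..

lemma S2_reduced: "S2.reduced = S1.reduced"
proof -
  have "S2.reduced_letter z = S1.reduced_letter z" for z
    unfolding S1.reduced_letter_def S2.reduced_letter_def by (cases z) simp_all
  thus ?thesis unfolding S1.reduced_def S2.reduced_def S2_alternating by simp
qed

lemma S2_word_val: "S2.word_val = S1.word_val"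
proof -
  have "S2.emb = S1.emb" unfolding S1.emb_def S2.emb_def by (auto intro!: ext)
  thus ?thesis unfolding S1.word_val_def S2.word_val_def by simp
qed

lemma S2_eval: "h \<in> carrier H \<Longrightarrow> S2.eval (h, t) = S1.eval (h, t)"
  unfolding S1.eval_def S2.eval_def S2_word_val by (simp add: compat)

lemma act_perm_compat: "h \<in> carrier H \<Longrightarrow> S1.act_perm (\<phi>1 h) = S2.act_perm (\<phi>2 h)"
  using S1.act_perm_Hsub S2.act_perm_Hsub S2_NF by simp

theorem action_on_normal_forms:
  assumes "is_amalgamated_product G G1 G2 H \<phi>1 \<phi>2 i1 i2"
    and "countable (carrier G1)" "countable (carrier G2)"
  obtains \<Phi> where "\<Phi> \<in> hom G (BijGroup S1.NF)"
    "\<And>x. x \<in> carrier G1 \<Longrightarrow> \<Phi> (i1 x) = S1.act_perm x"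
    "\<And>x. x \<in> carrier G2 \<Longrightarrow> \<Phi> (i2 x) = S2.act_perm x"
proof -
  have "\<exists>\<Phi>\<in>hom G (BijGroup S1.NF). (\<forall>x\<in>carrier G1. \<Phi> (i1 x) = S1.act_perm x) \<and>
      (\<forall>x\<in>carrier G2. \<Phi> (i2 x) = S2.act_perm x)"
    using assms S1.act_perm_hom S2.act_perm_hom act_perm_compat
    by (intro amalgamated_product_factor_countable) (auto simp: S2_NF group_BijGroup)
  thus thesis using that by blast
qed

end

section \<open>Paths in the Cayley graph\<close>

lemma walk_iff_successively: "walk adj xs \<longleftrightarrow> xs \<noteq> [] \<and> successively adj xs"
  unfolding walk_def successively_conv_nth ..

lemma walk_Cons: "walk adj (u # xs) \<longleftrightarrow> xs = [] \<or> walk adj xs \<and> adj u (hd xs)"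
  unfolding walk_iff_successively successively_Cons by auto

lemma gdist_le_walk: "walk adj xs \<Longrightarrow> gdist adj (hd xs) (last xs) \<le> enat (walk_length xs)"
  unfolding gdist_def by (rule Inf_lower) blast

context group
begin

lemma cayley_walk_list_prod:
  assumes S: "S \<subseteq> carrier G"
  shows "u \<in> carrier G \<Longrightarrow> set l \<subseteq> S \<Longrightarrow> \<exists>xs. walk (cayley_adj G S) xs \<and> hd xs = u \<and>
    last xs = u \<otimes> list_prod G l \<and> walk_length xs = length l"
proof (induction l arbitrary: u)
  case Nil
  thus ?case by (intro exI[of _ "[u]"]) (simp add: walk_def walk_length_def)
next
  case (Cons s l)
  have s: "s \<in> S" "s \<in> carrier G" using Cons.prems S by auto
  obtain xs where xs: "walk (cayley_adj G S) xs" "hd xs = u \<otimes> s" "last xs = (u \<otimes> s) \<otimes> list_prod G l"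
    "walk_length xs = length l" using Cons.IH[of "u \<otimes> s"] Cons.prems s by auto
  have ne: "xs \<noteq> []" using xs(1) unfolding walk_def by simp
  have "walk (cayley_adj G S) (u # xs)"
    unfolding walk_Cons using xs(1,2) s Cons.prems unfolding cayley_adj_def by auto
  moreover have "last (u # xs) = u \<otimes> list_prod G (s # l)"
    using xs(3) ne s Cons.prems S by (simp add: m_assoc subset_trans)
  moreover have "walk_length (u # xs) = length (s # l)"
    using xs(4) ne unfolding walk_length_def by (cases xs) simp_all
  ultimately show ?case by (intro exI[of _ "u # xs"]) simp
qed

lemma cayley_walk_nth:
  assumes S: "S \<subseteq> carrier G" and w: "walk (cayley_adj G S) xs" and h: "hd xs \<in> carrier G"
  shows "i < length xs \<Longrightarrow> \<exists>l. set l \<subseteq> S \<and> length l = i \<and> xs ! i = hd xs \<otimes> list_prod G l"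
proof (induction i)
  case 0
  thus ?case using h by (intro exI[of _ "[]"]) (simp add: hd_conv_nth)
next
  case (Suc i)
  obtain l where l: "set l \<subseteq> S" "length l = i" "xs ! i = hd xs \<otimes> list_prod G l" using Suc by auto
  have "cayley_adj G S (xs ! i) (xs ! Suc i)" using w Suc.prems unfolding walk_def by simp
  then obtain s where s: "s \<in> S" "xs ! Suc i = xs ! i \<otimes> s" unfolding cayley_adj_def by auto
  have "set l \<subseteq> carrier G" "s \<in> carrier G" using l(1) s(1) S by auto
  hence "xs ! Suc i = hd xs \<otimes> list_prod G (l @ [s])"
    using s(2) l(3) h by (simp add: list_prod_append m_assoc)
  thus ?case using l s by (intro exI[of _ "l @ [s]"]) auto
qed

end

section \<open>Normal forms along paths\<close>

locale amalgam_action = amalgam H G1 \<phi>1 G2 \<phi>2 G i1 i2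
  for H :: "('h, 'e) monoid_scheme" and G1 :: "('a, 'c) monoid_scheme" and \<phi>1
    and G2 :: "('b, 'd) monoid_scheme" and \<phi>2 and G :: "('g, 'f) monoid_scheme" and i1 i2 +
  fixes \<Phi> :: "'g \<Rightarrow> ('h \<times> ('a + 'b) list \<Rightarrow> 'h \<times> ('a + 'b) list)"
  assumes \<Phi>_hom: "\<Phi> \<in> hom G (BijGroup S1.NF)"
    and \<Phi>_i1: "x \<in> carrier G1 \<Longrightarrow> \<Phi> (i1 x) = S1.act_perm x"
    and \<Phi>_i2: "y \<in> carrier G2 \<Longrightarrow> \<Phi> (i2 y) = S2.act_perm y"
    and generated: "generate G (i1 ` carrier G1 \<union> i2 ` carrier G2) = carrier G"
begin

lemma \<Phi>_Bij: "g \<in> carrier G \<Longrightarrow> \<Phi> g \<in> Bij S1.NF"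
  using hom_in_carrier[OF \<Phi>_hom] by (simp add: BijGroup_def)

lemma \<Phi>_NF: "g \<in> carrier G \<Longrightarrow> w \<in> S1.NF \<Longrightarrow> \<Phi> g w \<in> S1.NF"
  using \<Phi>_Bij Bij_imp_funcset by fast

lemma \<Phi>_one: "w \<in> S1.NF \<Longrightarrow> \<Phi> \<one>\<^bsub>G\<^esub> w = w"
  using hom_one[OF \<Phi>_hom G.is_group group_BijGroup] by (simp add: BijGroup_def)

lemma \<Phi>_mult:
  assumes "g \<in> carrier G" "g' \<in> carrier G" "w \<in> S1.NF"
  shows "\<Phi> (g \<otimes>\<^bsub>G\<^esub> g') w = \<Phi> g (\<Phi> g' w)"
  using hom_mult[OF \<Phi>_hom assms(1,2)] \<Phi>_Bij assms by (simp add: BijGroup_def compose_def)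

lemma \<Phi>_i1_apply: "x \<in> carrier G1 \<Longrightarrow> w \<in> S1.NF \<Longrightarrow> \<Phi> (i1 x) w = S1.act x w"
  by (simp add: \<Phi>_i1 S1.act_perm_def)

lemma \<Phi>_i2_apply: "x \<in> carrier G2 \<Longrightarrow> w \<in> S1.NF \<Longrightarrow> \<Phi> (i2 x) w = S2.act x w"
  by (simp add: \<Phi>_i2 S2.act_perm_def S2_NF)

lemma eval_\<Phi>_generator:
  assumes "s \<in> i1 ` carrier G1 \<union> i2 ` carrier G2" "w \<in> S1.NF"
  shows "S1.eval (\<Phi> s w) = s \<otimes>\<^bsub>G\<^esub> S1.eval w"
  using assms
proof (elim UnE imageE)
  fix y assume y: "y \<in> carrier G2" "s = i2 y"
  have "S2.act y w \<in> S1.NF" using S2.act_NF[OF y(1)] assms(2) S2_NF by simp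
  hence "S1.eval (S2.act y w) = S2.eval (S2.act y w)" using S2_eval by (auto simp: S1.NF_def)
  also have "\<dots> = i2 y \<otimes>\<^bsub>G\<^esub> S2.eval w" using S2.eval_act y(1) assms(2) S2_NF by simp
  finally show ?thesis using y \<Phi>_i2_apply assms(2) S2_eval by (auto simp: S1.NF_def)
qed (simp add: \<Phi>_i1_apply S1.eval_act)

lemma eval_\<Phi>:
  assumes "g \<in> carrier G" "w \<in> S1.NF"
  shows "S1.eval (\<Phi> g w) = g \<otimes>\<^bsub>G\<^esub> S1.eval w"
proof -
  have "g \<in> generate G (i1 ` carrier G1 \<union> i2 ` carrier G2)" using generated assms(1) by simp
  thus ?thesis using assms(2)
  proof (induction arbitrary: w rule: generate.induct)
    case one
    thus ?case using \<Phi>_one S1.eval_closed by simp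
  next
    case (incl s)
    thus ?case by (rule eval_\<Phi>_generator)
  next
    case (inv s)
    from inv.hyps consider x where "x \<in> carrier G1" "s = i1 x" | y where "y \<in> carrier G2" "s = i2 y"
      by blast
    hence "inv\<^bsub>G\<^esub> s \<in> i1 ` carrier G1 \<union> i2 ` carrier G2"
    proof cases
      case 1
      hence "inv\<^bsub>G\<^esub> s = i1 (inv\<^bsub>G1\<^esub> x)" "inv\<^bsub>G1\<^esub> x \<in> carrier G1" by (simp_all add: I1.hom_inv)
      thus ?thesis by blast
    next
      case 2
      hence "inv\<^bsub>G\<^esub> s = i2 (inv\<^bsub>G2\<^esub> y)" "inv\<^bsub>G2\<^esub> y \<in> carrier G2" by (simp_all add: I2.hom_inv)
      thus ?thesis by blast
    qed
    thus ?case using inv.prems by (rule eval_\<Phi>_generator)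
  next
    case (eng g1 g2)
    have c: "g1 \<in> carrier G" "g2 \<in> carrier G"
      using eng.hyps generated by simp_all
    have "S1.eval (\<Phi> (g1 \<otimes>\<^bsub>G\<^esub> g2) w) = g1 \<otimes>\<^bsub>G\<^esub> (g2 \<otimes>\<^bsub>G\<^esub> S1.eval w)"
      using \<Phi>_mult[OF c eng.prems] eng.IH \<Phi>_NF[OF c(2) eng.prems] eng.prems by simp
    thus ?case using c S1.eval_closed[OF eng.prems] by (simp add: G.m_assoc)
  qed
qed

definition iota :: "'h \<Rightarrow> 'g" where
  "iota h = i1 (\<phi>1 h)"

definition nf :: "'g \<Rightarrow> 'h \<times> ('a + 'b) list" where
  "nf g = \<Phi> g (\<one>\<^bsub>H\<^esub>, [])"

lemma base_NF: "(\<one>\<^bsub>H\<^esub>, []) \<in> S1.NF"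
  by (simp add: S1.NF_def)

lemma iota_hom: "iota \<in> hom H G"
  unfolding iota_def using hom_compose[OF T1.homh I1.homh] by (simp add: comp_def)

lemma iota_closed: "h \<in> carrier H \<Longrightarrow> iota h \<in> carrier G"
  using hom_in_carrier[OF iota_hom] .

lemma nf_NF: "g \<in> carrier G \<Longrightarrow> nf g \<in> S1.NF"
  unfolding nf_def using \<Phi>_NF base_NF by simp

lemma eval_nf: "g \<in> carrier G \<Longrightarrow> S1.eval (nf g) = g"
  unfolding nf_def using eval_\<Phi>[OF _ base_NF] by (simp add: S1.eval_def)

lemma nf_iota: "h \<in> carrier H \<Longrightarrow> nf (iota h) = (h, [])"
  unfolding nf_def iota_def using \<Phi>_i1_apply base_NF S1.act_Hsub[of h] by simp

lemma iota_inj: "inj_on iota (carrier H)"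
  by (rule inj_onI) (metis nf_iota prod.inject)

lemma nf_Nil:
  assumes "g \<in> carrier G" "snd (nf g) = []"
  shows "fst (nf g) \<in> carrier H" "g = iota (fst (nf g))"
proof -
  show h: "fst (nf g) \<in> carrier H" using nf_NF[OF assms(1)] by (auto simp: S1.NF_def)
  have "g = S1.eval (nf g)" using eval_nf[OF assms(1)] by simp
  thus "g = iota (fst (nf g))" using assms(2) h by (simp add: S1.eval_def iota_def)
qed

lemma \<Phi>_letter_prepends:
  assumes z: "S1.reduced_letter z" and w: "(h, t) \<in> S1.NF" and alt: "t = [] \<or> isl (hd t) \<noteq> isl z"
  shows "\<exists>h' z'. \<Phi> (S1.emb z) (h, t) = (h', z' # t) \<and> isl z' = isl z"
proof (cases z)
  case (Inl c)
  have "\<not> S1.starts_K t" using alt Inl by (auto simp: S1.starts_K_def)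
  then obtain h' c' where "S1.act c (h, t) = (h', Inl c' # t)"
    using S1.act_grow[of c h t] z w Inl by (auto simp: S1.reduced_letter_def)
  thus ?thesis using Inl z \<Phi>_i1_apply[of c] w by (auto simp: S1.emb_def S1.reduced_letter_def)
next
  case (Inr d)
  have "\<not> S2.starts_K t" using alt Inr by (auto simp: S2.starts_K_def)
  then obtain h' d' where "S2.act d (h, t) = (h', Inr d' # t)"
    using S2.act_grow[of d h t] z w Inr S2_NF by (auto simp: S1.reduced_letter_def)
  thus ?thesis using Inr z \<Phi>_i2_apply[of d] w by (auto simp: S1.emb_def S1.reduced_letter_def)
qed

lemma nf_of_word:
  assumes "S1.reduced ys"
  shows "\<Phi> (S1.word_val ys) (\<one>\<^bsub>H\<^esub>, []) \<in> S1.NF \<and> length (snd (\<Phi> (S1.word_val ys) (\<one>\<^bsub>H\<^esub>, []))) = length ys \<and>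
    (ys \<noteq> [] \<longrightarrow> isl (hd (snd (\<Phi> (S1.word_val ys) (\<one>\<^bsub>H\<^esub>, [])))) = isl (hd ys))"
  using assms
proof (induction ys)
  case Nil
  thus ?case using \<Phi>_one base_NF by simp
next
  case (Cons z ys)
  have z: "S1.reduced_letter z" "S1.reduced ys" and alt: "ys \<noteq> [] \<longrightarrow> isl (hd ys) \<noteq> isl z"
    using Cons.prems unfolding S1.reduced_Cons by auto
  obtain h t where ht: "\<Phi> (S1.word_val ys) (\<one>\<^bsub>H\<^esub>, []) = (h, t)" by fastforce
  have IH: "(h, t) \<in> S1.NF" "length t = length ys" "ys \<noteq> [] \<longrightarrow> isl (hd t) = isl (hd ys)"
    using Cons.IH[OF z(2)] ht by auto
  have "t = [] \<or> isl (hd t) \<noteq> isl z" using IH(2,3) alt by auto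
  then obtain h' z' where step: "\<Phi> (S1.emb z) (h, t) = (h', z' # t)" "isl z' = isl z"
    using \<Phi>_letter_prepends[OF z(1) IH(1)] by blast
  have "\<Phi> (S1.word_val (z # ys)) (\<one>\<^bsub>H\<^esub>, []) = (h', z' # t)"
    using \<Phi>_mult[OF S1.emb_closed[OF z(1)] S1.reduced_word_val_closed[OF z(2)] base_NF] ht step(1)
    by (simp add: S1.word_val_Cons)
  moreover have "(h', z' # t) \<in> S1.NF"
    using \<Phi>_NF[OF S1.emb_closed[OF z(1)] IH(1)] step(1) by simp
  ultimately show ?case using IH(2) step(2) by simp
qed

lemma nf_iota_word:
  assumes ys: "S1.reduced ys" and h: "h \<in> carrier H"
  shows "length (snd (nf (iota h \<otimes>\<^bsub>G\<^esub> S1.word_val ys))) = length ys"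
    "ys \<noteq> [] \<Longrightarrow> isl (hd (snd (nf (iota h \<otimes>\<^bsub>G\<^esub> S1.word_val ys)))) = isl (hd ys)"
proof -
  obtain h' t where ht: "\<Phi> (S1.word_val ys) (\<one>\<^bsub>H\<^esub>, []) = (h', t)" by fastforce
  have g: "(h', t) \<in> S1.NF" "length t = length ys" "ys \<noteq> [] \<longrightarrow> isl (hd t) = isl (hd ys)"
    using nf_of_word[OF ys] ht by auto
  have "nf (iota h \<otimes>\<^bsub>G\<^esub> S1.word_val ys) = \<Phi> (iota h) (h', t)"
    unfolding nf_def using \<Phi>_mult[OF iota_closed[OF h] S1.reduced_word_val_closed[OF ys] base_NF] ht
    by simp
  also have "\<dots> = (h \<otimes>\<^bsub>H\<^esub> h', t)" unfolding iota_def using \<Phi>_i1_apply S1.act_Hsub h g(1) by simp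
  finally show "length (snd (nf (iota h \<otimes>\<^bsub>G\<^esub> S1.word_val ys))) = length ys"
    "ys \<noteq> [] \<Longrightarrow> isl (hd (snd (nf (iota h \<otimes>\<^bsub>G\<^esub> S1.word_val ys)))) = isl (hd ys)"
    using g by auto
qed

lemma reduced_mult_generator:
  assumes ys: "S1.reduced ys" "ys \<noteq> []" and s: "s \<in> i1 ` carrier G1 \<union> i2 ` carrier G2"
  shows "\<exists>h' ys'. h' \<in> carrier H \<and> S1.reduced ys' \<and>
    S1.word_val ys \<otimes>\<^bsub>G\<^esub> s = iota h' \<otimes>\<^bsub>G\<^esub> S1.word_val ys' \<and>
    (ys' \<noteq> [] \<longrightarrow> isl (hd ys') = isl (hd ys))"
  using s
proof (elim UnE imageE)
  fix x assume "x \<in> carrier G1" "s = i1 x"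
  thus ?thesis using S1.reduced_mult_K[OF ys] by (simp add: iota_def)
next
  fix y assume y: "y \<in> carrier G2" "s = i2 y"
  then obtain h' ys' where "h' \<in> carrier H" "S1.reduced ys'"
    "S1.word_val ys \<otimes>\<^bsub>G\<^esub> i2 y = i2 (\<phi>2 h') \<otimes>\<^bsub>G\<^esub> S1.word_val ys'"
    "ys' \<noteq> [] \<longrightarrow> isl (hd ys') = isl (hd ys)"
    using S2.reduced_mult_K[of ys y] ys by (auto simp: S2_reduced S2_word_val)
  thus ?thesis using y by (intro exI[of _ h'] exI[of _ ys']) (simp add: iota_def compat)
qed

lemma nf_side_step:
  assumes g: "g \<in> carrier G" and s: "s \<in> i1 ` carrier G1 \<union> i2 ` carrier G2"
    and ne: "snd (nf g) \<noteq> []" "snd (nf (g \<otimes>\<^bsub>G\<^esub> s)) \<noteq> []"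
  shows "isl (hd (snd (nf (g \<otimes>\<^bsub>G\<^esub> s)))) = isl (hd (snd (nf g)))"
proof -
  obtain h t where ht: "nf g = (h, t)" by fastforce
  have h: "h \<in> carrier H" and t: "S1.reduced t" "t \<noteq> []"
    using nf_NF[OF g] ht ne(1) S1.normal_imp_reduced by (auto simp: S1.NF_def)
  obtain h' ys' where hy: "h' \<in> carrier H" "S1.reduced ys'"
    "S1.word_val t \<otimes>\<^bsub>G\<^esub> s = iota h' \<otimes>\<^bsub>G\<^esub> S1.word_val ys'" "ys' \<noteq> [] \<longrightarrow> isl (hd ys') = isl (hd t)"
    using reduced_mult_generator[OF t s] by blast
  have "g = iota h \<otimes>\<^bsub>G\<^esub> S1.word_val t" using eval_nf[OF g] ht by (simp add: S1.eval_def iota_def)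
  hence "g \<otimes>\<^bsub>G\<^esub> s = iota (h \<otimes>\<^bsub>H\<^esub> h') \<otimes>\<^bsub>G\<^esub> S1.word_val ys'"
    using hy h s S1.reduced_word_val_closed t(1) hom_mult[OF iota_hom] iota_closed
    by (auto simp: G.m_assoc)
  moreover have hh: "h \<otimes>\<^bsub>H\<^esub> h' \<in> carrier H" using h hy(1) by simp
  ultimately have "ys' \<noteq> []" using nf_iota_word(1)[OF hy(2) hh] ne(2) by auto
  thus ?thesis using nf_iota_word(2)[OF hy(2) hh] \<open>g \<otimes>\<^bsub>G\<^esub> s = _\<close> hy(4) ht by simp
qed

lemma walk_meets_H:
  assumes S: "S \<subseteq> i1 ` carrier G1 \<union> i2 ` carrier G2" and w: "walk (cayley_adj G S) xs"
    and hd: "hd xs \<in> carrier G" "snd (nf (hd xs)) \<noteq> []" "isl (hd (snd (nf (hd xs))))"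
    and last: "snd (nf (last xs)) \<noteq> []" "\<not> isl (hd (snd (nf (last xs))))"
  shows "\<exists>x\<in>set xs. snd (nf x) = []"
proof (rule ccontr)
  assume "\<not> ?thesis"
  hence ne: "\<And>x. x \<in> set xs \<Longrightarrow> snd (nf x) \<noteq> []" by blast
  have xs: "xs \<noteq> []" using w unfolding walk_def by simp
  have "isl (hd (snd (nf (xs ! i))))" if "i < length xs" for i
    using that
  proof (induction i)
    case 0
    thus ?case using hd xs by (simp add: hd_conv_nth)
  next
    case (Suc i)
    have "cayley_adj G S (xs ! i) (xs ! Suc i)" using w Suc.prems unfolding walk_def by simp
    then obtain s where s: "s \<in> S" "xs ! Suc i = xs ! i \<otimes>\<^bsub>G\<^esub> s" "xs ! i \<in> carrier G"
      unfolding cayley_adj_def by auto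
    have "snd (nf (xs ! i)) \<noteq> []" "snd (nf (xs ! i \<otimes>\<^bsub>G\<^esub> s)) \<noteq> []"
      using ne[OF nth_mem[of i]] ne[OF nth_mem[OF Suc.prems]] Suc.prems s(2) by simp_all
    thus ?case using nf_side_step[OF s(3) _] s(1,2) S Suc by auto
  qed
  from this[of "length xs - 1"] show False using xs last by (simp add: last_conv_nth)
qed

lemma translate_word_inj:
  assumes ws: "\<And>j. S1.reduced (ws j)" "\<And>j. length (ws j) = 2 * j + 1"
    and h: "h \<in> carrier H" "h' \<in> carrier H"
    and eq: "iota h \<otimes>\<^bsub>G\<^esub> S1.word_val (ws j) = iota h' \<otimes>\<^bsub>G\<^esub> S1.word_val (ws j')"
  shows "h = h' \<and> j = j'"
proof -
  have "2 * j + 1 = 2 * j' + 1" using nf_iota_word(1)[OF ws(1) h(1), of j] nf_iota_word(1)[OF ws(1) h(2), of j']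
    eq ws(2) by simp
  hence j: "j = j'" by simp
  hence "iota h = iota h'"
    using G.r_cancel[OF _ iota_closed[OF h(1)] iota_closed[OF h(2)] S1.reduced_word_val_closed[OF ws(1)]] eq
    by simp
  thus ?thesis using iota_inj h j by (auto dest: inj_onD)
qed

end

section \<open>Extraterrestrial witnesses\<close>

definition zigzag :: "'w \<Rightarrow> 'w \<Rightarrow> nat \<Rightarrow> 'w list" where
  "zigzag x y j = concat (replicate j [x, y]) @ [x]"

lemma zigzag_0 [simp]: "zigzag x y 0 = [x]"
  by (simp add: zigzag_def)

lemma zigzag_Suc [simp]: "zigzag x y (Suc j) = x # y # zigzag x y j"
  by (simp add: zigzag_def)

lemma length_zigzag: "length (zigzag x y j) = 2 * j + 1"
  by (induction j) simp_all

lemma hd_zigzag [simp]: "hd (zigzag x y j) = x"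
  by (cases j) simp_all

lemma zigzag_not_Nil [simp]: "zigzag x y j \<noteq> []"
  by (simp add: zigzag_def)

locale amalgam_zigzag = amalgam_action H G1 \<phi>1 G2 \<phi>2 G i1 i2 \<Phi>
  for H :: "('h, 'e) monoid_scheme" and G1 :: "('a, 'c) monoid_scheme" and \<phi>1
    and G2 :: "('b, 'd) monoid_scheme" and \<phi>2 and G :: "('g, 'f) monoid_scheme" and i1 i2 \<Phi> +
  fixes S :: "'g set" and a :: 'a and b :: 'b
  assumes S_finite: "finite S" and S_factors: "S \<subseteq> i1 ` carrier G1 \<union> i2 ` carrier G2"
    and S_generates: "generate G S = carrier G" and S_inv: "s \<in> S \<Longrightarrow> inv\<^bsub>G\<^esub> s \<in> S"
    and a: "a \<in> carrier G1" "a \<notin> T1.Hsub" and b: "b \<in> carrier G2" "b \<notin> T2.Hsub"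
begin

definition u :: "nat \<Rightarrow> 'g" where "u j = S1.word_val (zigzag (Inl a) (Inr b) j)"
definition v :: "nat \<Rightarrow> 'g" where "v j = S1.word_val (zigzag (Inr b) (Inl a) j)"

lemma S_carrier: "S \<subseteq> carrier G"
  using S_factors by auto

lemma zigzag_reduced: "S1.reduced (zigzag (Inl a) (Inr b) j)" "S1.reduced (zigzag (Inr b) (Inl a) j)"
  using a b by (induction j) (simp_all add: S1.reduced_Cons S1.reduced_letter_def)

lemma u_closed: "u j \<in> carrier G" and v_closed: "v j \<in> carrier G"
  unfolding u_def v_def using zigzag_reduced S1.reduced_word_val_closed by auto

lemma nf_translate_u:
  "h \<in> carrier H \<Longrightarrow>
    length (snd (nf (iota h \<otimes>\<^bsub>G\<^esub> u j))) = 2 * j + 1 \<and> isl (hd (snd (nf (iota h \<otimes>\<^bsub>G\<^esub> u j))))"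
  unfolding u_def using nf_iota_word[OF zigzag_reduced(1)] by (simp add: length_zigzag)

lemma nf_translate_v:
  "h \<in> carrier H \<Longrightarrow>
    length (snd (nf (iota h \<otimes>\<^bsub>G\<^esub> v j))) = 2 * j + 1 \<and> \<not> isl (hd (snd (nf (iota h \<otimes>\<^bsub>G\<^esub> v j))))"
  unfolding v_def using nf_iota_word[OF zigzag_reduced(2)] by (simp add: length_zigzag)

lemma translate_u_inj:
  "h \<in> carrier H \<Longrightarrow> h' \<in> carrier H \<Longrightarrow> iota h \<otimes>\<^bsub>G\<^esub> u j = iota h' \<otimes>\<^bsub>G\<^esub> u j' \<Longrightarrow>
    h = h' \<and> j = j'"
  unfolding u_def by (rule translate_word_inj[OF zigzag_reduced(1) length_zigzag])

lemma translate_v_inj: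
  "h \<in> carrier H \<Longrightarrow> h' \<in> carrier H \<Longrightarrow> iota h \<otimes>\<^bsub>G\<^esub> v j = iota h' \<otimes>\<^bsub>G\<^esub> v j' \<Longrightarrow>
    h = h' \<and> j = j'"
  unfolding v_def by (rule translate_word_inj[OF zigzag_reduced(2) length_zigzag])

definition S_word :: "'g \<Rightarrow> 'g list" where
  "S_word g = (SOME l. set l \<subseteq> S \<and> g = list_prod G l)"

lemma S_word: assumes "g \<in> carrier G" shows "set (S_word g) \<subseteq> S" "list_prod G (S_word g) = g"
proof -
  have "S \<union> m_inv G ` S = S" using S_inv by auto
  hence "\<exists>l. set l \<subseteq> S \<and> g = list_prod G l"
    using G.generate_imp_list_prod[OF S_carrier] assms S_generates by simp
  thus "set (S_word g) \<subseteq> S" "list_prod G (S_word g) = g"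
    unfolding S_word_def by (metis (mono_tags, lifting) someI_ex)+
qed

definition U_set :: "'h set \<Rightarrow> nat \<Rightarrow> 'g set" where
  "U_set A M = (\<lambda>(h, j). iota h \<otimes>\<^bsub>G\<^esub> u j) ` (A \<times> {..<M})"

definition O_set :: "'h set \<Rightarrow> nat \<Rightarrow> 'g set" where
  "O_set A M = (\<lambda>(h, j). iota h \<otimes>\<^bsub>G\<^esub> v j) ` (A \<times> {..<M})"

text \<open>The index j of a point iota h u j is recovered from the length 2j+1 of its normal form.\<close>
definition shift :: "'g \<Rightarrow> 'g" where
  "shift x = (let j = length (snd (nf x)) div 2 in x \<otimes>\<^bsub>G\<^esub> (inv\<^bsub>G\<^esub> u j \<otimes>\<^bsub>G\<^esub> v j))"

definition shift_bound :: "nat \<Rightarrow> nat" where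
  "shift_bound M = (\<Sum>j<M. length (S_word (inv\<^bsub>G\<^esub> u j \<otimes>\<^bsub>G\<^esub> v j)))"

definition crossing_set :: "nat \<Rightarrow> nat \<Rightarrow> 'h set" where
  "crossing_set r M =
    {t \<in> carrier H. \<exists>j<M. \<exists>l. set l \<subseteq> S \<and> length l \<le> r \<and> iota t = u j \<otimes>\<^bsub>G\<^esub> list_prod G l}"

lemma u_inv_v: "u j \<otimes>\<^bsub>G\<^esub> (inv\<^bsub>G\<^esub> u j \<otimes>\<^bsub>G\<^esub> v j) = v j"
  using u_closed v_closed by (simp add: G.m_assoc[symmetric])

lemma shift_translate: "h \<in> carrier H \<Longrightarrow> shift (iota h \<otimes>\<^bsub>G\<^esub> u j) = iota h \<otimes>\<^bsub>G\<^esub> v j"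
  unfolding shift_def Let_def using nf_translate_u[of h j] iota_closed u_closed v_closed
  by (simp add: G.m_assoc u_inv_v)

lemma card_U_set: "A \<subseteq> carrier H \<Longrightarrow> card (U_set A M) = card A * M"
proof -
  assume A: "A \<subseteq> carrier H"
  have "inj_on (\<lambda>(h, j). iota h \<otimes>\<^bsub>G\<^esub> u j) (A \<times> {..<M})"
  proof (rule inj_onI, clarify)
    fix h j h' j' assume "h \<in> A" "h' \<in> A" "iota h \<otimes>\<^bsub>G\<^esub> u j = iota h' \<otimes>\<^bsub>G\<^esub> u j'"
    thus "h = h' \<and> j = j'" using translate_u_inj A by blast
  qed
  thus ?thesis unfolding U_set_def by (simp add: card_image card_cartesian_product)
qed

lemma shift_bij: assumes "A \<subseteq> carrier H" shows "bij_betw shift (U_set A M) (O_set A M)"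
proof -
  have "shift ` U_set A M = O_set A M"
    unfolding U_set_def O_set_def image_image using shift_translate assms
    by (intro image_cong) auto
  moreover have "inj_on shift (U_set A M)"
    unfolding U_set_def
  proof (rule inj_onI, clarify)
    fix h j h' j' assume hh: "h \<in> A" "h' \<in> A"
      "shift (iota h \<otimes>\<^bsub>G\<^esub> u j) = shift (iota h' \<otimes>\<^bsub>G\<^esub> u j')"
    hence "h = h' \<and> j = j'" using shift_translate translate_v_inj assms by (metis subsetD)
    thus "iota h \<otimes>\<^bsub>G\<^esub> u j = iota h' \<otimes>\<^bsub>G\<^esub> u j'" by simp
  qed
  ultimately show ?thesis unfolding bij_betw_def by simp
qed

lemma gdist_shift:
  assumes "A \<subseteq> carrier H" "x \<in> U_set A M"
  shows "gdist (cayley_adj G S) x (shift x) \<le> enat (shift_bound M)"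
proof -
  obtain h j where hj: "h \<in> A" "j < M" "x = iota h \<otimes>\<^bsub>G\<^esub> u j" using assms(2) unfolding U_set_def by auto
  have h: "h \<in> carrier H" using hj(1) assms(1) by auto
  have c: "inv\<^bsub>G\<^esub> u j \<otimes>\<^bsub>G\<^esub> v j \<in> carrier G" using u_closed v_closed by simp
  have "shift x = x \<otimes>\<^bsub>G\<^esub> (inv\<^bsub>G\<^esub> u j \<otimes>\<^bsub>G\<^esub> v j)"
    using shift_translate[OF h] hj(3) iota_closed[OF h] u_closed v_closed by (simp add: G.m_assoc u_inv_v)
  then obtain xs where xs: "walk (cayley_adj G S) xs" "hd xs = x" "last xs = shift x"
    "walk_length xs = length (S_word (inv\<^bsub>G\<^esub> u j \<otimes>\<^bsub>G\<^esub> v j))"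
    using G.cayley_walk_list_prod[OF S_carrier, of x] S_word[OF c] hj(3) iota_closed[OF h] u_closed
    by fastforce
  moreover have "length (S_word (inv\<^bsub>G\<^esub> u j \<otimes>\<^bsub>G\<^esub> v j)) \<le> shift_bound M"
    unfolding shift_bound_def using hj(2) by (intro member_le_sum) auto
  ultimately show ?thesis using gdist_le_walk[OF xs(1)] by (simp add: order_trans)
qed

lemma finite_crossing_set: "finite (crossing_set r M)"
proof -
  have "iota ` crossing_set r M \<subseteq>
      (\<Union>j<M. (\<lambda>l. u j \<otimes>\<^bsub>G\<^esub> list_prod G l) ` {l. set l \<subseteq> S \<and> length l \<le> r})"
    unfolding crossing_set_def by auto
  moreover have "finite {l. set l \<subseteq> S \<and> length l \<le> r}" using finite_lists_length_le[OF S_finite] .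
  ultimately have "finite (iota ` crossing_set r M)" by (elim finite_subset) simp
  moreover have "crossing_set r M \<subseteq> carrier H" unfolding crossing_set_def by auto
  ultimately show ?thesis using finite_imageD inj_on_subset[OF iota_inj] by blast
qed

lemma short_walk_meets_crossing:
  assumes A: "A \<subseteq> carrier H"
    and xs: "walk (cayley_adj G S) xs" "hd xs \<in> U_set A M" "last xs \<in> O_set A M"
    and r: "walk_length xs \<le> r"
  shows "\<exists>x\<in>set xs. x \<in> iota ` (A <#>\<^bsub>H\<^esub> crossing_set r M)"
proof -
  obtain h j where hj: "h \<in> A" "j < M" "hd xs = iota h \<otimes>\<^bsub>G\<^esub> u j" using xs(2) unfolding U_set_def by auto
  have h: "h \<in> carrier H" using hj(1) A by auto
  have hd: "hd xs \<in> carrier G" using hj(3) iota_closed[OF h] u_closed by simp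
  obtain h' j' where "h' \<in> A" "last xs = iota h' \<otimes>\<^bsub>G\<^esub> v j'" using xs(3) unfolding O_set_def by auto
  hence "snd (nf (last xs)) \<noteq> [] \<and> \<not> isl (hd (snd (nf (last xs))))"
    using nf_translate_v[of h' j'] A by (cases "snd (nf (last xs))") auto
  moreover have "snd (nf (hd xs)) \<noteq> [] \<and> isl (hd (snd (nf (hd xs))))"
    using nf_translate_u[OF h, of j] hj(3) by (cases "snd (nf (hd xs))") auto
  ultimately obtain x where x: "x \<in> set xs" "snd (nf x) = []"
    using walk_meets_H[OF S_factors xs(1) hd] by blast
  then obtain i where i: "i < length xs" "x = xs ! i" by (auto simp: in_set_conv_nth)
  obtain l where l: "set l \<subseteq> S" "length l = i" "x = hd xs \<otimes>\<^bsub>G\<^esub> list_prod G l"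
    using G.cayley_walk_nth[OF S_carrier xs(1) hd i(1)] i(2) by auto
  have lc: "list_prod G l \<in> carrier G" using l(1) S_carrier by (intro G.list_prod_closed) auto
  have xc: "x \<in> carrier G" using l(3) hd lc by simp
  define t where "t = inv\<^bsub>H\<^esub> h \<otimes>\<^bsub>H\<^esub> fst (nf x)"
  have fx: "fst (nf x) \<in> carrier H" "x = iota (fst (nf x))" using nf_Nil[OF xc x(2)] by auto
  have t: "t \<in> carrier H" "h \<otimes>\<^bsub>H\<^esub> t = fst (nf x)"
    unfolding t_def using h fx(1) by (simp_all add: T1.G.m_assoc[symmetric])
  have "iota t = inv\<^bsub>G\<^esub> iota h \<otimes>\<^bsub>G\<^esub> x"
    unfolding t_def using h fx hom_mult[OF iota_hom] group_hom.hom_inv[of H G iota] iota_hom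
    by (simp add: group_hom_def group_hom_axioms_def T1.G.is_group G.is_group)
  also have "\<dots> = u j \<otimes>\<^bsub>G\<^esub> list_prod G l"
    using l(3) hj(3) iota_closed[OF h] u_closed lc by (simp add: G.m_assoc[symmetric])
  finally have "iota t = u j \<otimes>\<^bsub>G\<^esub> list_prod G l" .
  moreover have "length l \<le> r" using l(2) r i(1) unfolding walk_length_def by simp
  ultimately have "t \<in> crossing_set r M"
    unfolding crossing_set_def using t(1) hj(2) l(1) by blast
  hence "fst (nf x) \<in> A <#>\<^bsub>H\<^esub> crossing_set r M" using t(2) hj(1) unfolding set_mult_def by force
  thus ?thesis using x(1) fx(2) by auto
qed

lemma U_set_nf:
  assumes "A \<subseteq> carrier H" "x \<in> U_set A M" shows "snd (nf x) \<noteq> [] \<and> isl (hd (snd (nf x)))"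
proof -
  obtain h j where "h \<in> carrier H" "x = iota h \<otimes>\<^bsub>G\<^esub> u j" using assms unfolding U_set_def by auto
  thus ?thesis using nf_translate_u[of h j] by (cases "snd (nf x)") auto
qed

lemma O_set_nf:
  assumes "A \<subseteq> carrier H" "x \<in> O_set A M" shows "snd (nf x) \<noteq> [] \<and> \<not> isl (hd (snd (nf x)))"
proof -
  obtain h j where "h \<in> carrier H" "x = iota h \<otimes>\<^bsub>G\<^esub> v j" using assms unfolding O_set_def by auto
  thus ?thesis using nf_translate_v[of h j] by (cases "snd (nf x)") auto
qed

lemma U_set_closed: "A \<subseteq> carrier H \<Longrightarrow> U_set A M \<subseteq> carrier G"
  unfolding U_set_def using iota_closed u_closed by auto

lemma O_set_closed: "A \<subseteq> carrier H \<Longrightarrow> O_set A M \<subseteq> carrier G"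
  unfolding O_set_def using iota_closed v_closed by auto

lemma extraterrestrial_witness:
  assumes A: "finite A" "A \<noteq> {}" "A \<subseteq> carrier H"
    and doubling: "card (A <#>\<^bsub>H\<^esub> crossing_set r (2 * m + 1)) < 2 * card A"
  shows "\<exists>U F Ou \<mu>. U \<subseteq> carrier G \<and> F \<subseteq> carrier G \<and> Ou \<subseteq> carrier G \<and>
      finite U \<and> finite F \<and> finite Ou \<and> U \<inter> F = {} \<and> U \<inter> Ou = {} \<and> F \<inter> Ou = {} \<and>
      U \<noteq> {} \<and> m * card F \<le> card U \<and> bij_betw \<mu> U Ou \<and>
      (\<forall>u\<in>U. gdist (cayley_adj G S) u (\<mu> u) \<le> enat (shift_bound (2 * m + 1))) \<and>
      (\<forall>xs. walk (cayley_adj G S) xs \<and> hd xs \<in> U \<and> last xs \<in> Ou \<longrightarrow>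
        (\<exists>x\<in>set xs. x \<in> F) \<or> r \<le> walk_length xs)"
proof -
  define M where "M = 2 * m + 1"
  define F where "F = iota ` (A <#>\<^bsub>H\<^esub> crossing_set r M)"
  have AT: "A <#>\<^bsub>H\<^esub> crossing_set r M \<subseteq> carrier H" "finite (A <#>\<^bsub>H\<^esub> crossing_set r M)"
    using A(1,3) finite_crossing_set unfolding set_mult_def crossing_set_def by auto
  have F: "F \<subseteq> carrier G" "finite F" "card F \<le> 2 * card A"
    using AT iota_closed doubling card_image_le[OF AT(2), of iota] unfolding F_def M_def by auto
  have F_nf: "snd (nf x) = []" if "x \<in> F" for x using that AT(1) nf_iota unfolding F_def by auto
  have "m * card F \<le> m * (2 * card A)" using F(3) by simp
  also have "\<dots> \<le> card (U_set A M)" unfolding card_U_set[OF A(3)] M_def by simp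
  finally have card: "m * card F \<le> card (U_set A M)" .
  have fin: "finite (U_set A M)" "finite (O_set A M)" unfolding U_set_def O_set_def using A(1) by simp_all
  have ne: "U_set A M \<noteq> {}" unfolding U_set_def M_def using A(2) by auto
  have disj: "U_set A M \<inter> F = {}" "U_set A M \<inter> O_set A M = {}" "F \<inter> O_set A M = {}"
    using U_set_nf[OF A(3)] O_set_nf[OF A(3)] F_nf by blast+
  have dist: "\<forall>x\<in>U_set A M. gdist (cayley_adj G S) x (shift x) \<le> enat (shift_bound M)"
    using gdist_shift[OF A(3)] by blast
  have walks: "\<forall>xs. walk (cayley_adj G S) xs \<and> hd xs \<in> U_set A M \<and> last xs \<in> O_set A M \<longrightarrow>
      (\<exists>y\<in>set xs. y \<in> F) \<or> r \<le> walk_length xs"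
  proof (intro allI impI)
    fix xs assume xs: "walk (cayley_adj G S) xs \<and> hd xs \<in> U_set A M \<and> last xs \<in> O_set A M"
    show "(\<exists>y\<in>set xs. y \<in> F) \<or> r \<le> walk_length xs"
    proof (cases "r \<le> walk_length xs")
      case False
      thus ?thesis using short_walk_meets_crossing[OF A(3), of xs M r] xs unfolding F_def by simp
    qed simp
  qed
  show ?thesis unfolding M_def[symmetric]
    by (intro exI[of _ "U_set A M"] exI[of _ F] exI[of _ "O_set A M"] exI[of _ shift] conjI)
      (fact U_set_closed[OF A(3)] F(1) O_set_closed[OF A(3)] fin(1) F(2) fin(2) disj ne card
        shift_bij[OF A(3)] dist walks)+
qed

theorem extraterrestrial_cayley_graph:
  assumes "amenable H" "countable (carrier H)"
  shows "extraterrestrial_graph (carrier G) (cayley_adj G S)"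
  unfolding extraterrestrial_graph_def
proof (rule allI, rule exI, rule allI)
  fix m r :: nat
  have "finite (crossing_set r (2 * m + 1))" "crossing_set r (2 * m + 1) \<subseteq> carrier H"
    using finite_crossing_set unfolding crossing_set_def by auto
  then obtain A where "finite A" "A \<noteq> {}" "A \<subseteq> carrier H"
    "card (A <#>\<^bsub>H\<^esub> crossing_set r (2 * m + 1)) < 2 * card A"
    using amenable_right_folner[OF T1.G.is_group assms] by blast
  thus "\<exists>U F Ou \<mu>. U \<subseteq> carrier G \<and> F \<subseteq> carrier G \<and> Ou \<subseteq> carrier G \<and>
      finite U \<and> finite F \<and> finite Ou \<and> U \<inter> F = {} \<and> U \<inter> Ou = {} \<and> F \<inter> Ou = {} \<and>
      U \<noteq> {} \<and> m * card F \<le> card U \<and> bij_betw \<mu> U Ou \<and>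
      (\<forall>u\<in>U. gdist (cayley_adj G S) u (\<mu> u) \<le> enat (shift_bound (2 * m + 1))) \<and>
      (\<forall>xs. walk (cayley_adj G S) xs \<and> hd xs \<in> U \<and> last xs \<in> Ou \<longrightarrow>
        (\<exists>x\<in>set xs. x \<in> F) \<or> r \<le> walk_length xs)"
    by (rule extraterrestrial_witness)
qed

end

lemma finitely_generated_symmetric:
  assumes "group K" "finitely_generated K"
  obtains S where "finite S" "S \<subseteq> carrier K" "\<And>s. s \<in> S \<Longrightarrow> inv\<^bsub>K\<^esub> s \<in> S"
    "generate K S = carrier K"
proof -
  interpret K: group K by fact
  obtain S where S: "finite S" "S \<subseteq> carrier K" "generate K S = carrier K"
    using assms(2) unfolding finitely_generated_def by blast
  have sub: "S \<union> m_inv K ` S \<subseteq> carrier K" using S(2) by auto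
  have gen: "generate K (S \<union> m_inv K ` S) = carrier K"
    using K.generate_incl[OF sub] K.mono_generate[of S "S \<union> m_inv K ` S"] S(3) by blast
  have sym: "inv\<^bsub>K\<^esub> s \<in> S \<union> m_inv K ` S" if s: "s \<in> S \<union> m_inv K ` S" for s
  proof (cases "s \<in> S")
    case False
    then obtain x where "x \<in> S" "s = inv\<^bsub>K\<^esub> x" using s by blast
    thus ?thesis using K.inv_inv S(2) by auto
  qed blast
  have "finite (S \<union> m_inv K ` S)" using S(1) by simp
  from that[OF this sub sym gen] show thesis .
qed

lemma (in amalgam) generating_set_of_factors:
  assumes gen: "generate G (i1 ` carrier G1 \<union> i2 ` carrier G2) = carrier G"
    and S1: "S1 \<subseteq> carrier G1" "\<And>s. s \<in> S1 \<Longrightarrow> inv\<^bsub>G1\<^esub> s \<in> S1" "generate G1 S1 = carrier G1"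
    and S2: "S2 \<subseteq> carrier G2" "\<And>s. s \<in> S2 \<Longrightarrow> inv\<^bsub>G2\<^esub> s \<in> S2" "generate G2 S2 = carrier G2"
  shows "s \<in> i1 ` S1 \<union> i2 ` S2 \<Longrightarrow> inv\<^bsub>G\<^esub> s \<in> i1 ` S1 \<union> i2 ` S2"
    and "generate G (i1 ` S1 \<union> i2 ` S2) = carrier G"
proof -
  show "inv\<^bsub>G\<^esub> s \<in> i1 ` S1 \<union> i2 ` S2" if s: "s \<in> i1 ` S1 \<union> i2 ` S2"
  proof -
    from s consider x where "x \<in> S1" "s = i1 x" | y where "y \<in> S2" "s = i2 y" by blast
    thus ?thesis
    proof cases
      case 1
      hence "inv\<^bsub>G\<^esub> s = i1 (inv\<^bsub>G1\<^esub> x)" using S1(1) I1.hom_inv by auto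
      thus ?thesis using S1(2)[OF 1(1)] by blast
    next
      case 2
      hence "inv\<^bsub>G\<^esub> s = i2 (inv\<^bsub>G2\<^esub> y)" using S2(1) I2.hom_inv by auto
      thus ?thesis using S2(2)[OF 2(1)] by blast
    qed
  qed
  have sub: "i1 ` S1 \<union> i2 ` S2 \<subseteq> carrier G" using S1(1) S2(1) by auto
  have "i1 ` carrier G1 \<subseteq> generate G (i1 ` S1 \<union> i2 ` S2)"
    using I1.generate_img[OF S1(1)] S1(3) G.mono_generate[of "i1 ` S1" "i1 ` S1 \<union> i2 ` S2"] by auto
  moreover have "i2 ` carrier G2 \<subseteq> generate G (i1 ` S1 \<union> i2 ` S2)"
    using I2.generate_img[OF S2(1)] S2(3) G.mono_generate[of "i2 ` S2" "i1 ` S1 \<union> i2 ` S2"] by auto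
  ultimately have "carrier G \<subseteq> generate G (i1 ` S1 \<union> i2 ` S2)"
    using G.generate_subgroup_incl[OF _ G.generate_is_subgroup[OF sub]] gen by (metis Un_least)
  thus "generate G (i1 ` S1 \<union> i2 ` S2) = carrier G" using G.generate_incl[OF sub] by blast
qed

theorem (in amalgam) amalgamated_product_extraterrestrial:
  assumes amalg: "is_amalgamated_product G G1 G2 H \<phi>1 \<phi>2 i1 i2"
    and fg: "finitely_generated G1" "finitely_generated G2" "finitely_generated H"
    and "amenable H" and proper: "T1.Hsub \<noteq> carrier G1" "T2.Hsub \<noteq> carrier G2"
  shows "extraterrestrial_group G"
proof -
  have gen: "generate G (i1 ` carrier G1 \<union> i2 ` carrier G2) = carrier G"
    using amalg unfolding is_amalgamated_product_def by blast
  obtain \<Phi> where \<Phi>: "\<Phi> \<in> hom G (BijGroup S1.NF)" "\<And>x. x \<in> carrier G1 \<Longrightarrow> \<Phi> (i1 x) = S1.act_perm x"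
    "\<And>x. x \<in> carrier G2 \<Longrightarrow> \<Phi> (i2 x) = S2.act_perm x"
    using action_on_normal_forms[OF amalg] finitely_generated_countable fg T1.H.is_group T2.H.is_group
    by metis
  interpret amalgam_action H G1 \<phi>1 G2 \<phi>2 G i1 i2 \<Phi>
    by unfold_locales (fact \<Phi> gen)+
  obtain X1 where X1: "finite X1" "X1 \<subseteq> carrier G1" "\<And>s. s \<in> X1 \<Longrightarrow> inv\<^bsub>G1\<^esub> s \<in> X1"
    "generate G1 X1 = carrier G1" using finitely_generated_symmetric[OF T1.H.is_group fg(1)] by metis
  obtain X2 where X2: "finite X2" "X2 \<subseteq> carrier G2" "\<And>s. s \<in> X2 \<Longrightarrow> inv\<^bsub>G2\<^esub> s \<in> X2"
    "generate G2 X2 = carrier G2" using finitely_generated_symmetric[OF T2.H.is_group fg(2)] by metis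
  have "T1.Hsub \<subseteq> carrier G1" "T2.Hsub \<subseteq> carrier G2" by auto
  then obtain a b where ab: "a \<in> carrier G1" "a \<notin> T1.Hsub" "b \<in> carrier G2" "b \<notin> T2.Hsub"
    using proper by blast
  interpret amalgam_zigzag H G1 \<phi>1 G2 \<phi>2 G i1 i2 \<Phi> "i1 ` X1 \<union> i2 ` X2" a b
  proof unfold_locales
    show "finite (i1 ` X1 \<union> i2 ` X2)" using X1(1) X2(1) by simp
    show "i1 ` X1 \<union> i2 ` X2 \<subseteq> i1 ` carrier G1 \<union> i2 ` carrier G2" using X1(2) X2(2) by blast
    show "generate G (i1 ` X1 \<union> i2 ` X2) = carrier G"
      by (rule generating_set_of_factors(2)[OF gen X1(2-4) X2(2-4)])
    show "inv\<^bsub>G\<^esub> s \<in> i1 ` X1 \<union> i2 ` X2" if "s \<in> i1 ` X1 \<union> i2 ` X2" for s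
      using generating_set_of_factors(1)[OF gen X1(2-4) X2(2-4)] that by blast
  qed (fact ab)+
  have "extraterrestrial_graph (carrier G) (cayley_adj G (i1 ` X1 \<union> i2 ` X2))"
    by (rule extraterrestrial_cayley_graph[OF \<open>amenable H\<close> finitely_generated_countable[OF T1.G.is_group fg(3)]])
  moreover have "\<forall>s\<in>i1 ` X1 \<union> i2 ` X2. inv\<^bsub>G\<^esub> s \<in> i1 ` X1 \<union> i2 ` X2" using S_inv by blast
  ultimately show ?thesis unfolding extraterrestrial_group_def
    by (intro exI[of _ "i1 ` X1 \<union> i2 ` X2"] conjI) (use S_generates X1(1,2) X2(1,2) in auto)
qed

theorem mainTheorem11:
  fixes G1 :: "('a, 'c) monoid_scheme" and G2 :: "('b, 'd) monoid_scheme"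
    and H :: "('h, 'e) monoid_scheme" and G :: "('g, 'f) monoid_scheme"
    and \<phi>1 :: "'h \<Rightarrow> 'a" and \<phi>2 :: "'h \<Rightarrow> 'b" and i1 :: "'a \<Rightarrow> 'g" and i2 :: "'b \<Rightarrow> 'g"
  assumes "group G1" "group G2" "group H"
    and "finitely_generated G1" "finitely_generated G2" "finitely_generated H"
    and "amenable H"
    and "\<phi>1 \<in> hom H G1" "inj_on \<phi>1 (carrier H)" "\<phi>1 ` carrier H \<noteq> carrier G1"
    and "\<phi>2 \<in> hom H G2" "inj_on \<phi>2 (carrier H)" "\<phi>2 ` carrier H \<noteq> carrier G2"
    and "is_amalgamated_product G G1 G2 H \<phi>1 \<phi>2 i1 i2"
  shows "extraterrestrial_group G"
proof -
  interpret amalgam H G1 \<phi>1 G2 \<phi>2 G i1 i2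
    using assms unfolding is_amalgamated_product_def
    by (intro amalgam.intro transversal.intro group_hom.intro group_hom_axioms.intro
        transversal_axioms.intro amalgam_axioms.intro) auto
  show ?thesis using amalgamated_product_extraterrestrial assms(4-7,10,13,14) by blast
qed

end
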